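(* Let $N=N_A+N_B$ qubits be partitioned into $A$ and $B$, let $Q_0\in\{0,\dots,N\}$, and let $\ell:\{0,\dots,N_A\}\to\mathbb{Z}_{\ge0}$ with $r=\sum_{Q_A}\ell(Q_A)$. If $|\Phi\rangle$ is Haar-random in the charge-$Q_0$ sector of $AB$ and $p(Q_A,+):=\langle\Phi|\big(\hat\Pi_{Q_A}\otimes(|+\rangle\langle+|)^{\otimes N_B}\big)|\Phi\rangle$, then $$\mathbb{E}_\Phi\left[\prod_{Q_A=0}^{N_A}p(Q_A,+)^{\ell(Q_A)}\right]=\frac{\left(\binom{N}{Q_0}-1\right)!}{\left(\binom{N}{Q_0}-1+r\right)!}\,2^{-rN_B}\prod_{Q_A=0}^{N_A}\binom{N_B}{Q_0-Q_A}^{\ell(Q_A)}\frac{\left(\binom{N_A}{Q_A}-1+\ell(Q_A)\right)!}{\left(\binom{N_A}{Q_A}-1\right)!}.$$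
   Context: Charge of a computational basis string is its Hamming weight; $\hat\Pi_{Q_A}$ is the projector onto the charge-$Q_A$ sector of $A$, of dimension $\binom{N_A}{Q_A}$; $|+\rangle=(|0\rangle+|1\rangle)/\sqrt2$. Convention: $\binom{n}{m}=0$ if $m\notin\{0,\dots,n\}$, and $0^0=1$. *)

theory Defs
  imports "HOL-Analysis.Analysis" "HOL-Probability.Probability"
begin

text \<open>Computational basis strings of N qubits are encoded as the set of positions
 (in {..<N}) carrying a 1.  Qubits {..<NA} form A, qubits {NA..<NA+NB} form B.
 The charge of a string is its Hamming weight, i.e. the cardinality of the set.\<close>

definition basis_strings :: "nat \<Rightarrow> nat set set" where
  "basis_strings N = Pow {..<N}"

definition charge_sector :: "nat \<Rightarrow> nat \<Rightarrow> nat set set" where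
  "charge_sector N Q = {x. x \<subseteq> {..<N} \<and> card x = Q}"

definition charge_proj_A :: "nat \<Rightarrow> nat \<Rightarrow> nat set \<Rightarrow> nat set \<Rightarrow> complex" where
  "charge_proj_A NA QA x y =
     (if x \<inter> {..<NA} = y \<inter> {..<NA} \<and> card (x \<inter> {..<NA}) = QA then 1 else 0)"

definition plus_amp :: "bool \<Rightarrow> complex" where
  "plus_amp b = complex_of_real (1 / sqrt 2)"

definition plus_proj_B :: "nat \<Rightarrow> nat \<Rightarrow> nat set \<Rightarrow> nat set \<Rightarrow> complex" where
  "plus_proj_B NA NB x y =
     (\<Prod>j\<in>{NA..<NA+NB}. plus_amp (j \<in> x) * cnj (plus_amp (j \<in> y)))"

definition expval :: "nat \<Rightarrow> (nat set \<Rightarrow> nat set \<Rightarrow> complex) \<Rightarrow> (nat set \<Rightarrow> complex) \<Rightarrow> complex" where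
  "expval N Op \<Phi> = (\<Sum>x\<in>basis_strings N. \<Sum>y\<in>basis_strings N. cnj (\<Phi> x) * Op x y * \<Phi> y)"

definition p_plus :: "nat \<Rightarrow> nat \<Rightarrow> nat \<Rightarrow> (nat set \<Rightarrow> complex) \<Rightarrow> real" where
  "p_plus NA NB QA \<Phi> =
     Re (expval (NA + NB) (\<lambda>x y. charge_proj_A NA QA x y * plus_proj_B NA NB x y) \<Phi>)"

definition sector_space :: "nat \<Rightarrow> nat \<Rightarrow> (nat set \<Rightarrow> complex) measure" where
  "sector_space N Q = PiM (charge_sector N Q) (\<lambda>_. (lborel :: complex measure))"

definition sector_norm :: "nat \<Rightarrow> nat \<Rightarrow> (nat set \<Rightarrow> complex) \<Rightarrow> real" where
  "sector_norm N Q c = sqrt (\<Sum>s\<in>charge_sector N Q. (cmod (c s))\<^sup>2)"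

definition sector_ball :: "nat \<Rightarrow> nat \<Rightarrow> (nat set \<Rightarrow> complex) set" where
  "sector_ball N Q = {c \<in> space (sector_space N Q). sector_norm N Q c \<le> 1}"

definition sector_state :: "nat \<Rightarrow> nat \<Rightarrow> (nat set \<Rightarrow> complex) \<Rightarrow> (nat set \<Rightarrow> complex)" where
  "sector_state N Q c =
     (\<lambda>x. if x \<in> charge_sector N Q then c x / complex_of_real (sector_norm N Q c) else 0)"

text \<open>Haar (unitarily invariant, normalised surface) average over unit vectors of the
 charge-Q sector, realised as the cone measure: E[f] = (1/vol B) \<integral>_B f(c/|c|) dc.\<close>
definition haar_expectation :: "nat \<Rightarrow> nat \<Rightarrow> ((nat set \<Rightarrow> complex) \<Rightarrow> real) \<Rightarrow> real" where
  "haar_expectation N Q f =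
     integral\<^sup>L (uniform_measure (sector_space N Q) (sector_ball N Q)) (\<lambda>c. f (sector_state N Q c))"

end

theory Submission
  imports Defs
begin

text \<open>
  The Haar average over the charge-Q0 sector S0 is realised by the uniform measure on its unit ball.
  In polar coordinates the ball average of a scale-invariant function g equals
  (D - 1)! / ((D - 1 + r)! pi^D) times the Gaussian integral of |c|^(2r) g(c), where D = |S0|.
  For g = prod p(QA,+)^l(QA) one has p(QA,+) = 2^(-NB) R_QA(c) / |c|^2 with
  R_QA(c) = sum_a |sum_(x in fibre a) c_x|^2, the fibre of an A-string a of charge QA consisting of
  the strings of S0 whose A-part is a. So |c|^(2r) g = 2^(-r NB) prod R_QA^l(QA), and its Gaussian
  integral factorizes over the blocks of fixed QA. In a block every fibre has m = binom(NB, Q0 - QA)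
  elements and the fibre sums of independent standard Gaussians are independent Gaussians of
  variance m, so the factor is m^l times the moment E|z|^(2l) = (d - 1 + l)! / (d - 1)! of a standard
  Gaussian vector in C^d, d = binom(NA, QA).
\<close>

section \<open>Gaussian integrals on the complex plane\<close>

lemma nn_integral_lborel_complex_affine:
  fixes g :: "complex \<Rightarrow> ennreal" and v :: complex and t :: real
  assumes [measurable]: "g \<in> borel_measurable borel" and t: "t \<noteq> 0"
  shows "(\<integral>\<^sup>+z. g z \<partial>lborel) = ennreal (t\<^sup>2) * (\<integral>\<^sup>+z. g (v + t *\<^sub>R z) \<partial>lborel)"
proof -
  have "(\<integral>\<^sup>+z. g z \<partial>lborel)
      = (\<integral>\<^sup>+z. g z \<partial>density (distr lborel borel (\<lambda>x. v + t *\<^sub>R x)) (\<lambda>_. ennreal (\<bar>t\<bar> ^ DIM(complex))))"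
    using lborel_affine[OF t, of v] by (metis (no_types))
  also have "\<dots> = (\<integral>\<^sup>+z. ennreal (\<bar>t\<bar>\<^sup>2) * g (v + t *\<^sub>R z) \<partial>lborel)"
    by (simp add: nn_integral_density nn_integral_distr)
  finally show ?thesis
    by (simp add: nn_integral_cmult)
qed

lemma gaussian_nn_integral_real: "(\<integral>\<^sup>+x. ennreal (exp (- x\<^sup>2)) \<partial>lborel) = ennreal (sqrt pi)"
proof -
  define \<sigma> :: real where "\<sigma> = 1 / sqrt 2"
  have "exp (- x\<^sup>2) = sqrt pi * normal_density 0 \<sigma> x" for x
    by (simp add: normal_density_def \<sigma>_def power_divide real_sqrt_mult)
  moreover have "(\<integral>\<^sup>+x. ennreal (normal_density 0 \<sigma> x) \<partial>lborel) = 1"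
    using integrable_normal_density[of \<sigma> 0] integral_normal_density[of \<sigma> 0]
    by (subst nn_integral_eq_integral) (auto simp: \<sigma>_def)
  ultimately show ?thesis
    by (simp add: ennreal_mult nn_integral_cmult)
qed

lemma gaussian_nn_integral_complex:
  "(\<integral>\<^sup>+z. ennreal (exp (- (cmod (z::complex))\<^sup>2)) \<partial>lborel) = ennreal pi"
proof -
  have "(\<integral>\<^sup>+(z::complex). (\<Prod>b\<in>Basis. ennreal (exp (- (z \<bullet> b)\<^sup>2))) \<partial>lborel)
      = (\<Prod>b\<in>(Basis::complex set). (\<integral>\<^sup>+x. ennreal (exp (- x\<^sup>2)) \<partial>lborel))"
    by (rule nn_integral_lborel_prod) auto
  also have "(\<lambda>z::complex. \<Prod>b\<in>Basis. ennreal (exp (- (z \<bullet> b)\<^sup>2))) = (\<lambda>z. ennreal (exp (- (cmod z)\<^sup>2)))"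
    by (auto simp: Basis_complex_def cmod_power2 ennreal_mult[symmetric] exp_add[symmetric])
  finally show ?thesis
    by (simp add: gaussian_nn_integral_real Basis_complex_def ennreal_mult[symmetric])
qed

lemma gaussian_nn_integral_complex_shift:
  fixes v :: complex and s :: real
  assumes s: "s > 0"
  shows "(\<integral>\<^sup>+z. ennreal (exp (- (s * (cmod (z - v))\<^sup>2))) \<partial>lborel) = ennreal (pi / s)"
proof -
  define t where "t = 1 / sqrt s"
  have t: "t \<noteq> 0" "t\<^sup>2 = 1 / s"
    using s by (auto simp: t_def power_divide)
  have "(\<integral>\<^sup>+z. ennreal (exp (- (s * (cmod (z - v))\<^sup>2))) \<partial>lborel)
      = ennreal (t\<^sup>2) * (\<integral>\<^sup>+z. ennreal (exp (- (s * (cmod (v + t *\<^sub>R z - v))\<^sup>2))) \<partial>lborel)"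
    by (rule nn_integral_lborel_complex_affine) (auto simp: t)
  also have "(\<lambda>z. ennreal (exp (- (s * (cmod (v + t *\<^sub>R z - v))\<^sup>2)))) = (\<lambda>z. ennreal (exp (- (cmod z)\<^sup>2)))"
    using s t by (auto simp: power_mult_distrib)
  finally show ?thesis
    using s t by (simp add: gaussian_nn_integral_complex ennreal_mult[symmetric])
qed

lemma completing_square_real:
  fixes x y a :: real
  shows "(x - a * y)\<^sup>2 + y\<^sup>2 = (a\<^sup>2 + 1) * (y - a / (a\<^sup>2 + 1) * x)\<^sup>2 + x\<^sup>2 / (a\<^sup>2 + 1)"
proof -
  define s where "s = a\<^sup>2 + 1"
  have s: "s > 0"
    by (simp add: s_def add_nonneg_pos)
  define L where "L = (x - a * y)\<^sup>2 + y\<^sup>2"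
  define Z where "Z = y - a / s * x"
  have "s * L = (s * y - a * x)\<^sup>2 + x\<^sup>2"
    unfolding s_def L_def by (simp add: power2_eq_square algebra_simps)
  also have "s * y - a * x = s * Z"
    using s by (simp add: Z_def field_simps)
  finally have "L = s * Z\<^sup>2 + x\<^sup>2 / s"
    using s by (simp add: field_simps power2_eq_square)
  then show ?thesis
    unfolding L_def Z_def s_def .
qed

lemma completing_square_complex:
  fixes u w :: complex and a :: real
  shows "(cmod (u - a *\<^sub>R w))\<^sup>2 + (cmod w)\<^sup>2
       = (a\<^sup>2 + 1) * (cmod (w - (a / (a\<^sup>2 + 1)) *\<^sub>R u))\<^sup>2 + (cmod u)\<^sup>2 / (a\<^sup>2 + 1)"
  using completing_square_real[of "Re u" a "Re w"] completing_square_real[of "Im u" a "Im w"]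
  by (simp add: cmod_power2 distrib_left add_divide_distrib)

lemma gaussian_nn_integral_complete_square:
  fixes u :: complex and a :: real
  shows "(\<integral>\<^sup>+w. ennreal (exp (- (cmod (u - a *\<^sub>R w))\<^sup>2 - (cmod w)\<^sup>2)) \<partial>lborel)
       = ennreal (pi / (a\<^sup>2 + 1) * exp (- (cmod u)\<^sup>2 / (a\<^sup>2 + 1)))"
proof -
  define s where "s = a\<^sup>2 + 1"
  have s: "s > 0"
    by (simp add: s_def add_nonneg_pos)
  have "exp (- (cmod (u - a *\<^sub>R w))\<^sup>2 - (cmod w)\<^sup>2)
      = exp (- (cmod u)\<^sup>2 / s) * exp (- (s * (cmod (w - (a / s) *\<^sub>R u))\<^sup>2))" for w
    using completing_square_complex[of u a w] by (simp add: s_def exp_add[symmetric] algebra_simps)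
  then have "(\<integral>\<^sup>+w. ennreal (exp (- (cmod (u - a *\<^sub>R w))\<^sup>2 - (cmod w)\<^sup>2)) \<partial>lborel)
      = ennreal (exp (- (cmod u)\<^sup>2 / s)) * (\<integral>\<^sup>+w. ennreal (exp (- (s * (cmod (w - (a / s) *\<^sub>R u))\<^sup>2))) \<partial>lborel)"
    by (simp add: ennreal_mult nn_integral_cmult)
  then show ?thesis
    using s by (simp add: gaussian_nn_integral_complex_shift ennreal_mult[symmetric] s_def mult.commute)
qed

text \<open>The sum of independent complex Gaussians of variances \<open>a\<^sup>2\<close> and \<open>1\<close> is Gaussian of variance \<open>a\<^sup>2 + 1\<close>.\<close>
lemma gaussian_nn_integral_sum2:
  fixes G :: "complex \<Rightarrow> ennreal" and a :: real
  assumes [measurable]: "G \<in> borel_measurable borel"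
  shows "(\<integral>\<^sup>+y. \<integral>\<^sup>+w. ennreal (exp (- (cmod y)\<^sup>2 - (cmod w)\<^sup>2)) * G (a *\<^sub>R w + y) \<partial>lborel \<partial>lborel)
       = ennreal pi * (\<integral>\<^sup>+u. ennreal (exp (- (cmod u)\<^sup>2)) * G (sqrt (a\<^sup>2 + 1) *\<^sub>R u) \<partial>lborel)"
proof -
  define s where "s = a\<^sup>2 + 1"
  have s: "s > 0"
    by (simp add: s_def add_nonneg_pos)
  have "(\<integral>\<^sup>+y. \<integral>\<^sup>+w. ennreal (exp (- (cmod y)\<^sup>2 - (cmod w)\<^sup>2)) * G (a *\<^sub>R w + y) \<partial>lborel \<partial>lborel)
      = (\<integral>\<^sup>+w. \<integral>\<^sup>+y. ennreal (exp (- (cmod y)\<^sup>2 - (cmod w)\<^sup>2)) * G (a *\<^sub>R w + y) \<partial>lborel \<partial>lborel)"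
    by (rule lborel_pair.Fubini') measurable
  also have "\<dots> = (\<integral>\<^sup>+w. \<integral>\<^sup>+u. ennreal (exp (- (cmod (u - a *\<^sub>R w))\<^sup>2 - (cmod w)\<^sup>2)) * G u \<partial>lborel \<partial>lborel)"
  proof (rule nn_integral_cong)
    fix w :: complex
    show "(\<integral>\<^sup>+y. ennreal (exp (- (cmod y)\<^sup>2 - (cmod w)\<^sup>2)) * G (a *\<^sub>R w + y) \<partial>lborel)
        = (\<integral>\<^sup>+u. ennreal (exp (- (cmod (u - a *\<^sub>R w))\<^sup>2 - (cmod w)\<^sup>2)) * G u \<partial>lborel)"
      using nn_integral_lborel_complex_affine
        [of "\<lambda>u. ennreal (exp (- (cmod (u - a *\<^sub>R w))\<^sup>2 - (cmod w)\<^sup>2)) * G u" 1 "a *\<^sub>R w"]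
      by simp
  qed
  also have "\<dots> = (\<integral>\<^sup>+u. \<integral>\<^sup>+w. ennreal (exp (- (cmod (u - a *\<^sub>R w))\<^sup>2 - (cmod w)\<^sup>2)) * G u \<partial>lborel \<partial>lborel)"
    by (rule lborel_pair.Fubini') measurable
  also have "\<dots> = (\<integral>\<^sup>+u. ennreal (pi / s) * (ennreal (exp (- (cmod u)\<^sup>2 / s)) * G u) \<partial>lborel)"
  proof (rule nn_integral_cong)
    fix u :: complex
    have "(\<integral>\<^sup>+w. ennreal (exp (- (cmod (u - a *\<^sub>R w))\<^sup>2 - (cmod w)\<^sup>2)) * G u \<partial>lborel)
        = ennreal (pi / s * exp (- (cmod u)\<^sup>2 / s)) * G u"
      by (simp add: nn_integral_multc gaussian_nn_integral_complete_square s_def)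
    then show "(\<integral>\<^sup>+w. ennreal (exp (- (cmod (u - a *\<^sub>R w))\<^sup>2 - (cmod w)\<^sup>2)) * G u \<partial>lborel)
        = ennreal (pi / s) * (ennreal (exp (- (cmod u)\<^sup>2 / s)) * G u)"
      using s by (simp add: ennreal_mult[symmetric] mult.assoc[symmetric])
  qed
  also have "\<dots> = ennreal (pi / s) * (\<integral>\<^sup>+u. ennreal (exp (- (cmod u)\<^sup>2 / s)) * G u \<partial>lborel)"
    by (simp add: nn_integral_cmult)
  also have "(\<integral>\<^sup>+u. ennreal (exp (- (cmod u)\<^sup>2 / s)) * G u \<partial>lborel)
      = ennreal ((sqrt s)\<^sup>2) * (\<integral>\<^sup>+z. ennreal (exp (- (cmod (0 + sqrt s *\<^sub>R z))\<^sup>2 / s)) * G (0 + sqrt s *\<^sub>R z) \<partial>lborel)"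
    by (rule nn_integral_lborel_complex_affine) (use s in auto)
  also have "(\<lambda>z. ennreal (exp (- (cmod (0 + sqrt s *\<^sub>R z))\<^sup>2 / s)) * G (0 + sqrt s *\<^sub>R z))
      = (\<lambda>z. ennreal (exp (- (cmod z)\<^sup>2)) * G (sqrt s *\<^sub>R z))"
    using s by (auto simp: power_mult_distrib)
  also have "ennreal (pi / s) * (ennreal ((sqrt s)\<^sup>2) * integral\<^sup>N lborel \<dots>)
      = ennreal pi * integral\<^sup>N lborel \<dots>"
    using s by (simp add: mult.assoc[symmetric] ennreal_mult[symmetric])
  finally show ?thesis
    unfolding s_def .
qed

section \<open>Products of complex Lebesgue measures\<close>

interpretation lborel_complex: product_sigma_finite "\<lambda>_::'i. lborel :: complex measure"
  by unfold_locales

abbreviation PiC :: "'i set \<Rightarrow> ('i \<Rightarrow> complex) measure" where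
  "PiC S \<equiv> PiM S (\<lambda>_. lborel)"

definition sqnorm :: "'i set \<Rightarrow> ('i \<Rightarrow> complex) \<Rightarrow> real" where
  "sqnorm S c = (\<Sum>s\<in>S. (cmod (c s))\<^sup>2)"

lemma sqnorm_measurable[measurable]: "sqnorm S \<in> borel_measurable (PiC S)"
  unfolding sqnorm_def by measurable

lemma sqnorm_nonneg: "0 \<le> sqnorm S c"
  unfolding sqnorm_def by (simp add: sum_nonneg)

lemma sqnorm_scale: "sqnorm S (\<lambda>s\<in>S. t *\<^sub>R c s) = t\<^sup>2 * sqnorm S c"
  unfolding sqnorm_def by (simp add: sum_distrib_left power_mult_distrib)

lemma sqnorm_fun_upd:
  "finite S \<Longrightarrow> i \<notin> S \<Longrightarrow> sqnorm (insert i S) (x(i := y)) = (cmod y)\<^sup>2 + sqnorm S x"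
  unfolding sqnorm_def by (simp add: sum.insert_if) (rule sum.cong, auto)

lemma sqnorm_merge:
  "finite A \<Longrightarrow> finite B \<Longrightarrow> A \<inter> B = {} \<Longrightarrow> sqnorm (A \<union> B) (merge A B (x, y)) = sqnorm A x + sqnorm B y"
  unfolding sqnorm_def by (subst sum.union_disjoint) (auto intro!: sum.cong simp: merge_def)

lemma cmod_sum_square_le_sqnorm:
  assumes "finite S" "F \<subseteq> S"
  shows "(cmod (\<Sum>x\<in>F. c x))\<^sup>2 \<le> (real (card F))\<^sup>2 * sqnorm S c"
proof -
  have "cmod (c x) \<le> sqrt (sqnorm S c)" if "x \<in> S" for x
    using member_le_sum[of x S "\<lambda>s. (cmod (c s))\<^sup>2"] that assms(1) real_le_rsqrt
    by (simp add: sqnorm_def)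
  then have "cmod (\<Sum>x\<in>F. c x) \<le> real (card F) * sqrt (sqnorm S c)"
    using norm_sum[of c F] sum_mono[of F "\<lambda>x. cmod (c x)" "\<lambda>_. sqrt (sqnorm S c)"] assms(2)
    by (force simp: subset_iff)
  from power_mono[OF this norm_ge_zero, of 2] show ?thesis
    by (simp add: power_mult_distrib sqnorm_nonneg)
qed

lemma sigma_finite_PiC: "finite S \<Longrightarrow> sigma_finite_measure (PiC S)"
proof -
  assume "finite S"
  then interpret finite_product_sigma_finite "\<lambda>_. lborel :: complex measure" S
    by unfold_locales
  show ?thesis
    by unfold_locales
qed

lemma measurable_fun_upd_PiC:
  fixes F :: "('i \<Rightarrow> complex) \<Rightarrow> ennreal"
  assumes "i \<notin> S" "F \<in> borel_measurable (PiC (insert i S))"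
  shows "(\<lambda>z. F (z(i := v))) \<in> borel_measurable (PiC S)"
proof -
  have "(\<lambda>z. \<lambda>u\<in>insert i S. if u = i then v else z u) \<in> PiC S \<rightarrow>\<^sub>M PiC (insert i S)"
    by (rule measurable_restrict) (auto split: if_split)
  from measurable_comp[OF this assms(2)]
  have "(\<lambda>z. F (\<lambda>u\<in>insert i S. if u = i then v else z u)) \<in> borel_measurable (PiC S)"
    by (simp add: comp_def)
  moreover have "z(i := v) = (\<lambda>u\<in>insert i S. if u = i then v else z u)" if "z \<in> space (PiC S)" for z
    using that assms(1) by (auto simp: space_PiM PiE_def extensional_def fun_eq_iff)
  ultimately show ?thesis
    by (simp cong: measurable_cong)
qed

lemma gaussian_nn_integral_insert:
  fixes g :: "('i \<Rightarrow> complex) \<Rightarrow> ennreal"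
  assumes S: "finite S" "i \<notin> S" and [measurable]: "g \<in> borel_measurable (PiC (insert i S))"
  shows "(\<integral>\<^sup>+c. ennreal (exp (- sqnorm (insert i S) c)) * g c \<partial>PiC (insert i S))
       = (\<integral>\<^sup>+w. ennreal (exp (- (cmod w)\<^sup>2)) *
            (\<integral>\<^sup>+z. ennreal (exp (- sqnorm S z)) * g (z(i := w)) \<partial>PiC S) \<partial>lborel)"
proof -
  have "(\<integral>\<^sup>+c. ennreal (exp (- sqnorm (insert i S) c)) * g c \<partial>PiC (insert i S))
      = (\<integral>\<^sup>+w. \<integral>\<^sup>+z. ennreal (exp (- (cmod w)\<^sup>2)) * (ennreal (exp (- sqnorm S z)) * g (z(i := w)))
           \<partial>PiC S \<partial>lborel)"
    using S by (simp add: lborel_complex.product_nn_integral_insert_rev sqnorm_fun_upd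
        exp_add exp_minus inverse_mult_distrib ennreal_mult mult_ac)
  also have "\<dots> = (\<integral>\<^sup>+w. ennreal (exp (- (cmod w)\<^sup>2)) *
            (\<integral>\<^sup>+z. ennreal (exp (- sqnorm S z)) * g (z(i := w)) \<partial>PiC S) \<partial>lborel)"
    using S by (intro nn_integral_cong nn_integral_cmult) measurable
  finally show ?thesis .
qed

lemma gaussian_nn_integral_merge:
  fixes g :: "('i \<Rightarrow> complex) \<Rightarrow> ennreal"
  assumes AB: "finite A" "finite B" "A \<inter> B = {}" and [measurable]: "g \<in> borel_measurable (PiC (A \<union> B))"
  shows "(\<integral>\<^sup>+c. ennreal (exp (- sqnorm (A \<union> B) c)) * g c \<partial>PiC (A \<union> B))
       = (\<integral>\<^sup>+x. ennreal (exp (- sqnorm A x)) *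
            (\<integral>\<^sup>+y. ennreal (exp (- sqnorm B y)) * g (merge A B (x, y)) \<partial>PiC B) \<partial>PiC A)"
proof -
  have "(\<integral>\<^sup>+c. ennreal (exp (- sqnorm (A \<union> B) c)) * g c \<partial>PiC (A \<union> B))
      = (\<integral>\<^sup>+x. \<integral>\<^sup>+y. ennreal (exp (- sqnorm A x)) * (ennreal (exp (- sqnorm B y)) * g (merge A B (x, y)))
           \<partial>PiC B \<partial>PiC A)"
    using AB by (simp add: lborel_complex.product_nn_integral_fold sqnorm_merge
        exp_add exp_minus inverse_mult_distrib ennreal_mult mult_ac)
  also have "\<dots> = (\<integral>\<^sup>+x. ennreal (exp (- sqnorm A x)) *
            (\<integral>\<^sup>+y. ennreal (exp (- sqnorm B y)) * g (merge A B (x, y)) \<partial>PiC B) \<partial>PiC A)"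
    by (intro nn_integral_cong nn_integral_cmult) measurable
  finally show ?thesis .
qed

lemma nn_integral_PiC_scale:
  fixes g :: "('i \<Rightarrow> complex) \<Rightarrow> ennreal"
  assumes "finite S" "t > 0" "g \<in> borel_measurable (PiC S)"
  shows "integral\<^sup>N (PiC S) g = ennreal (t ^ (2 * card S)) * (\<integral>\<^sup>+c. g (\<lambda>s\<in>S. t *\<^sub>R c s) \<partial>PiC S)"
  using assms(1,3)
proof (induction S arbitrary: g rule: finite_induct)
  case empty
  have "(\<integral>\<^sup>+c. g (\<lambda>s\<in>{}. t *\<^sub>R c s) \<partial>PiC {}) = (\<integral>\<^sup>+c. g c \<partial>PiC {})"
    by (rule nn_integral_cong) (auto simp: space_PiM_empty restrict_def)
  then show ?case
    by (simp only: card.empty mult_0_right power_0 ennreal_1 mult_1)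
next
  case (insert i S)
  note [measurable] = insert.prems
  define H where "H x = (\<integral>\<^sup>+y. g (x(i := t *\<^sub>R y)) \<partial>lborel)" for x
  have [measurable]: "H \<in> borel_measurable (PiC S)"
    unfolding H_def using insert.hyps by measurable
  have "integral\<^sup>N (PiC (insert i S)) g = (\<integral>\<^sup>+x. \<integral>\<^sup>+y. g (x(i := y)) \<partial>lborel \<partial>PiC S)"
    by (rule lborel_complex.product_nn_integral_insert) (use insert in auto)
  also have "\<dots> = (\<integral>\<^sup>+x. ennreal (t\<^sup>2) * H x \<partial>PiC S)"
  proof (rule nn_integral_cong)
    fix x assume x: "x \<in> space (PiC S)"
    have [measurable]: "(\<lambda>y. g (x(i := y))) \<in> borel_measurable borel"
      using measurable_comp[OF measurable_component_update[OF x insert.hyps(2)] insert.prems]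
      by (simp add: comp_def)
    show "(\<integral>\<^sup>+y. g (x(i := y)) \<partial>lborel) = ennreal (t\<^sup>2) * H x"
      unfolding H_def using nn_integral_lborel_complex_affine[of "\<lambda>y. g (x(i := y))" t 0] assms(2)
      by simp
  qed
  also have "\<dots> = ennreal (t\<^sup>2) * integral\<^sup>N (PiC S) H"
    by (simp add: nn_integral_cmult)
  also have "integral\<^sup>N (PiC S) H = ennreal (t ^ (2 * card S)) * (\<integral>\<^sup>+c. H (\<lambda>s\<in>S. t *\<^sub>R c s) \<partial>PiC S)"
    by (rule insert.IH) measurable
  also have "(\<integral>\<^sup>+c. H (\<lambda>s\<in>S. t *\<^sub>R c s) \<partial>PiC S)
      = (\<integral>\<^sup>+x. \<integral>\<^sup>+y. g (\<lambda>s\<in>insert i S. t *\<^sub>R (x(i := y)) s) \<partial>lborel \<partial>PiC S)"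
  proof (rule nn_integral_cong)
    fix x :: "'i \<Rightarrow> complex"
    have "(\<lambda>s\<in>S. t *\<^sub>R x s)(i := t *\<^sub>R y) = (\<lambda>s\<in>insert i S. t *\<^sub>R (x(i := y)) s)" for y
      using insert.hyps(2) by (auto simp: fun_eq_iff)
    then show "H (\<lambda>s\<in>S. t *\<^sub>R x s) = (\<integral>\<^sup>+y. g (\<lambda>s\<in>insert i S. t *\<^sub>R (x(i := y)) s) \<partial>lborel)"
      unfolding H_def by simp
  qed
  also have "\<dots> = (\<integral>\<^sup>+c. g (\<lambda>s\<in>insert i S. t *\<^sub>R c s) \<partial>PiC (insert i S))"
    by (rule lborel_complex.product_nn_integral_insert[symmetric]) (use insert in auto)
  finally have "integral\<^sup>N (PiC (insert i S)) g
      = ennreal (t\<^sup>2) * (ennreal (t ^ (2 * card S)) * (\<integral>\<^sup>+c. g (\<lambda>s\<in>insert i S. t *\<^sub>R c s) \<partial>PiC (insert i S)))" .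
  moreover have "ennreal (t\<^sup>2) * ennreal (t ^ (2 * card S)) = ennreal (t ^ (2 * card (insert i S)))"
    using insert.hyps assms(2) by (simp add: ennreal_mult[symmetric] power_add[symmetric])
  ultimately show ?case
    by (simp only: mult.assoc[symmetric])
qed

section \<open>Polar coordinates\<close>

definition homogeneous :: "'i set \<Rightarrow> nat \<Rightarrow> (('i \<Rightarrow> complex) \<Rightarrow> ennreal) \<Rightarrow> bool" where
  "homogeneous S m k \<longleftrightarrow>
     (\<forall>c\<in>space (PiC S). \<forall>t>0. k (\<lambda>s\<in>S. t *\<^sub>R c s) = ennreal (t ^ (2 * m)) * k c)"

definition ball_integral :: "'i set \<Rightarrow> (('i \<Rightarrow> complex) \<Rightarrow> ennreal) \<Rightarrow> ennreal" where
  "ball_integral S k = (\<integral>\<^sup>+c. indicator {c. sqnorm S c \<le> 1} c * k c \<partial>PiC S)"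

lemma nn_integral_ball_scale:
  fixes k :: "('i \<Rightarrow> complex) \<Rightarrow> ennreal"
  assumes fin: "finite S" and [measurable]: "k \<in> borel_measurable (PiC S)"
    and hom: "homogeneous S m k" and s: "s > 0"
  shows "(\<integral>\<^sup>+c. indicator {c. sqnorm S c \<le> s} c * k c \<partial>PiC S) = ennreal (s ^ (card S + m)) * ball_integral S k"
proof -
  define t where "t = sqrt s"
  have t: "t > 0" "t\<^sup>2 = s"
    using s by (auto simp: t_def)
  have "(\<integral>\<^sup>+c. indicator {c. sqnorm S c \<le> s} c * k c \<partial>PiC S)
      = ennreal (t ^ (2 * card S)) *
          (\<integral>\<^sup>+c. indicator {c. sqnorm S c \<le> s} (\<lambda>s\<in>S. t *\<^sub>R c s) * k (\<lambda>s\<in>S. t *\<^sub>R c s) \<partial>PiC S)"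
    by (rule nn_integral_PiC_scale[OF fin t(1)]) measurable
  also have "(\<integral>\<^sup>+c. indicator {c. sqnorm S c \<le> s} (\<lambda>s\<in>S. t *\<^sub>R c s) * k (\<lambda>s\<in>S. t *\<^sub>R c s) \<partial>PiC S)
      = (\<integral>\<^sup>+c. ennreal (t ^ (2 * m)) * (indicator {c. sqnorm S c \<le> 1} c * k c) \<partial>PiC S)"
    using hom t s by (intro nn_integral_cong) (simp add: homogeneous_def sqnorm_scale indicator_def)
  also have "\<dots> = ennreal (t ^ (2 * m)) * ball_integral S k"
    unfolding ball_integral_def by (rule nn_integral_cmult) measurable
  finally show ?thesis
    using t s by (simp add: power_mult ennreal_mult power_add mult.assoc)
qed

text \<open>Layer cake in the radial variable \<open>|c|\<^sup>2\<close>: by homogeneity each layer is a rescaled unit ball.\<close>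
lemma nn_integral_layer_cake:
  fixes k :: "('i \<Rightarrow> complex) \<Rightarrow> ennreal" and w :: "real \<Rightarrow> real"
  assumes fin: "finite S" and [measurable]: "k \<in> borel_measurable (PiC S)" "w \<in> borel_measurable borel"
    and w: "\<And>s. 0 \<le> w s" and hom: "homogeneous S m k"
  shows "(\<integral>\<^sup>+c. (\<integral>\<^sup>+s. ennreal (w s) * indicator {0<..} s * indicator {sqnorm S c..} s \<partial>lborel) * k c \<partial>PiC S)
       = (\<integral>\<^sup>+s. ennreal (w s * s ^ (card S + m)) * indicator {0<..} s \<partial>lborel) * ball_integral S k"
proof -
  interpret sigma_finite_measure "PiC S"
    using sigma_finite_PiC[OF fin] .
  interpret P: pair_sigma_finite "PiC S" "lborel :: real measure"
    by unfold_locales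
  have [measurable]: "Measurable.pred (PiC S \<Otimes>\<^sub>M lborel) (\<lambda>p. sqnorm S (fst p) \<le> snd p)"
    by measurable
  have "(\<integral>\<^sup>+c. (\<integral>\<^sup>+s. ennreal (w s) * indicator {0<..} s * indicator {sqnorm S c..} s \<partial>lborel) * k c \<partial>PiC S)
      = (\<integral>\<^sup>+c. \<integral>\<^sup>+s. ennreal (w s) * indicator {0<..} s * indicator {sqnorm S c..} s * k c \<partial>lborel \<partial>PiC S)"
    by (intro nn_integral_cong nn_integral_multc[symmetric]) measurable
  also have "\<dots> = (\<integral>\<^sup>+s. \<integral>\<^sup>+c. ennreal (w s) * indicator {0<..} s * indicator {sqnorm S c..} s * k c \<partial>PiC S \<partial>lborel)"
  proof (rule P.Fubini'[symmetric])
    have "(\<lambda>(c, s). indicator {sqnorm S c..} s :: ennreal) = indicator {p. sqnorm S (fst p) \<le> snd p}"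
      by (auto simp: fun_eq_iff indicator_def)
    then have [measurable]: "(\<lambda>(c, s). indicator {sqnorm S c..} s :: ennreal) \<in> borel_measurable (PiC S \<Otimes>\<^sub>M lborel)"
      by simp
    show "(\<lambda>(c, s). ennreal (w s) * indicator {0<..} s * indicator {sqnorm S c..} s * k c) \<in> borel_measurable (PiC S \<Otimes>\<^sub>M lborel)"
      by measurable
  qed
  also have "\<dots> = (\<integral>\<^sup>+s. ennreal (w s * s ^ (card S + m)) * indicator {0<..} s * ball_integral S k \<partial>lborel)"
  proof (rule nn_integral_cong)
    fix s :: real
    show "(\<integral>\<^sup>+c. ennreal (w s) * indicator {0<..} s * indicator {sqnorm S c..} s * k c \<partial>PiC S)
        = ennreal (w s * s ^ (card S + m)) * indicator {0<..} s * ball_integral S k"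
    proof (cases "s > 0")
      case True
      have "(\<integral>\<^sup>+c. ennreal (w s) * indicator {0<..} s * indicator {sqnorm S c..} s * k c \<partial>PiC S)
          = (\<integral>\<^sup>+c. ennreal (w s) * (indicator {c. sqnorm S c \<le> s} c * k c) \<partial>PiC S)"
        using True by (intro nn_integral_cong) (simp add: indicator_def)
      also have "\<dots> = ennreal (w s) * (ennreal (s ^ (card S + m)) * ball_integral S k)"
        using nn_integral_ball_scale[OF fin _ hom True] by (simp add: nn_integral_cmult)
      finally show ?thesis
        using True w[of s] by (simp add: ennreal_mult mult.assoc)
    qed simp
  qed
  also have "\<dots> = (\<integral>\<^sup>+s. ennreal (w s * s ^ (card S + m)) * indicator {0<..} s \<partial>lborel) * ball_integral S k"
    by (rule nn_integral_multc) measurable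
  finally show ?thesis .
qed

lemma nn_integral_exp_tail:
  fixes u :: real
  assumes u: "0 \<le> u"
  shows "(\<integral>\<^sup>+s. ennreal (exp (- s)) * indicator {0<..} s * indicator {u..} s \<partial>lborel) = ennreal (exp (- u))"
proof -
  have "((\<lambda>x::real. - exp (- x)) \<longlongrightarrow> - 0) at_top"
    by (intro tendsto_minus filterlim_compose[OF exp_at_bot filterlim_uminus_at_bot_at_top])
  then have "(\<integral>\<^sup>+s. ennreal (exp (- s)) * indicator {u..} s \<partial>lborel) = ennreal (0 - (- exp (- u)))"
    by (intro nn_integral_FTC_atLeast) (auto intro!: derivative_eq_intros)
  moreover have "(\<integral>\<^sup>+s. ennreal (exp (- s)) * indicator {0<..} s * indicator {u..} s \<partial>lborel)
      = (\<integral>\<^sup>+s. ennreal (exp (- s)) * indicator {u..} s \<partial>lborel)"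
    by (rule nn_integral_cong_AE, rule AE_mp[OF AE_lborel_singleton[of 0]])
       (use u in \<open>auto simp: indicator_def\<close>)
  ultimately show ?thesis
    by simp
qed

lemma nn_integral_exp_power:
  "(\<integral>\<^sup>+s. ennreal (exp (- s) * s ^ n) * indicator {0<..} s \<partial>lborel) = ennreal (fact n)"
proof -
  have "(\<integral>\<^sup>+s. ennreal (exp (- s) * s ^ n) * indicator {0<..} s \<partial>lborel)
      = (\<integral>\<^sup>+s. ennreal (s ^ n * exp (- s)) * indicator {0..} s \<partial>lborel)"
    by (rule nn_integral_cong_AE, rule AE_mp[OF AE_lborel_singleton[of 0]])
       (auto simp: indicator_def mult.commute)
  then show ?thesis
    by (simp add: nn_intergal_power_times_exp_Ici)
qed

lemma gaussian_nn_integral_homogeneous: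
  fixes k :: "('i \<Rightarrow> complex) \<Rightarrow> ennreal"
  assumes "finite S" "k \<in> borel_measurable (PiC S)" "homogeneous S m k"
  shows "(\<integral>\<^sup>+c. ennreal (exp (- sqnorm S c)) * k c \<partial>PiC S) = ennreal (fact (card S + m)) * ball_integral S k"
proof -
  have "(\<integral>\<^sup>+c. ennreal (exp (- sqnorm S c)) * k c \<partial>PiC S)
      = (\<integral>\<^sup>+c. (\<integral>\<^sup>+s. ennreal (exp (- s)) * indicator {0<..} s * indicator {sqnorm S c..} s \<partial>lborel) * k c \<partial>PiC S)"
    by (simp add: nn_integral_exp_tail sqnorm_nonneg)
  also have "\<dots> = (\<integral>\<^sup>+s. ennreal (exp (- s) * s ^ (card S + m)) * indicator {0<..} s \<partial>lborel) * ball_integral S k"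
    by (rule nn_integral_layer_cake[OF assms(1,2) _ _ assms(3)]) auto
  finally show ?thesis
    by (simp add: nn_integral_exp_power)
qed

lemma nn_integral_power_density_tail:
  fixes u :: real and r :: nat
  assumes u: "0 \<le> u" and r: "r \<ge> 1"
  shows "(\<integral>\<^sup>+s. ennreal (if 0 \<le> s \<and> s \<le> 1 then real r * s ^ (r - 1) else 0) * indicator {0<..} s * indicator {u..} s \<partial>lborel)
       = (if u \<le> 1 then ennreal (1 - u ^ r) else 0)"
proof (cases "u \<le> 1")
  case True
  have "(\<integral>\<^sup>+s. ennreal (if 0 \<le> s \<and> s \<le> 1 then real r * s ^ (r - 1) else 0) * indicator {0<..} s * indicator {u..} s \<partial>lborel)
      = (\<integral>\<^sup>+s. ennreal (real r * s ^ (r - 1)) * indicator {u..1} s \<partial>lborel)"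
    by (rule nn_integral_cong_AE, rule AE_mp[OF AE_lborel_singleton[of 0]])
       (use u in \<open>auto simp: indicator_def\<close>)
  also have "\<dots> = ennreal (1 ^ r - u ^ r)"
    by (rule nn_integral_FTC_Icc) (use True u r in \<open>auto intro!: derivative_eq_intros\<close>)
  finally show ?thesis
    using True by simp
next
  case False
  then have "(\<lambda>s. ennreal (if 0 \<le> s \<and> s \<le> 1 then real r * s ^ (r - 1) else 0) * indicator {0<..} s * indicator {u..} s) = (\<lambda>_. 0)"
    by (auto simp: indicator_def fun_eq_iff)
  then show ?thesis
    using False by simp
qed

lemma nn_integral_power_density_moment:
  fixes r d :: nat
  assumes r: "r \<ge> 1"
  shows "(\<integral>\<^sup>+s. ennreal ((if 0 \<le> s \<and> s \<le> 1 then real r * s ^ (r - 1) else 0) * s ^ (d + 0)) * indicator {0<..} s \<partial>lborel)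
       = ennreal (real r / real (r + d))"
proof -
  have "(\<integral>\<^sup>+s. ennreal ((if 0 \<le> s \<and> s \<le> 1 then real r * s ^ (r - 1) else 0) * s ^ (d + 0)) * indicator {0<..} s \<partial>lborel)
      = (\<integral>\<^sup>+s. ennreal (real r * s ^ (r - 1 + d)) * indicator {0..1} s \<partial>lborel)"
    by (rule nn_integral_cong_AE, rule AE_mp[OF AE_lborel_singleton[of 0]])
       (auto simp: indicator_def power_add)
  also have "\<dots> = ennreal (real r / real (r + d) * 1 ^ (r + d) - real r / real (r + d) * 0 ^ (r + d))"
  proof (rule nn_integral_FTC_Icc)
    fix x :: real
    have "DERIV (\<lambda>x. real r / real (r + d) * x ^ (r + d)) x :> real r / real (r + d) * (real (r + d) * x ^ (r + d - 1))"
      by (auto intro!: derivative_eq_intros)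
    then show "DERIV (\<lambda>x. real r / real (r + d) * x ^ (r + d)) x :> real r * x ^ (r - 1 + d)"
      using r by (simp add: Suc_diff_le)
  qed auto
  finally show ?thesis
    using r by (simp add: power_0_left)
qed

lemma ball_integral_sqnorm_power_complement:
  fixes h :: "('i \<Rightarrow> complex) \<Rightarrow> ennreal"
  assumes fin: "finite S" and [measurable]: "h \<in> borel_measurable (PiC S)" and hom: "homogeneous S 0 h"
  shows "(\<integral>\<^sup>+c. indicator {c. sqnorm S c \<le> 1} c * ennreal (1 - sqnorm S c ^ r) * h c \<partial>PiC S)
       = ennreal (real r / real (r + card S)) * ball_integral S h"
proof (cases "r = 0")
  case False
  define w where "w s = (if 0 \<le> s \<and> s \<le> 1 then real r * s ^ (r - 1) else 0)" for s :: real
  have "(\<integral>\<^sup>+c. indicator {c. sqnorm S c \<le> 1} c * ennreal (1 - sqnorm S c ^ r) * h c \<partial>PiC S)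
      = (\<integral>\<^sup>+c. (\<integral>\<^sup>+s. ennreal (w s) * indicator {0<..} s * indicator {sqnorm S c..} s \<partial>lborel) * h c \<partial>PiC S)"
  proof (rule nn_integral_cong)
    fix c
    have "(\<integral>\<^sup>+s. ennreal (w s) * indicator {0<..} s * indicator {sqnorm S c..} s \<partial>lborel)
        = (if sqnorm S c \<le> 1 then ennreal (1 - sqnorm S c ^ r) else 0)"
      unfolding w_def using False by (intro nn_integral_power_density_tail sqnorm_nonneg) simp
    then show "indicator {c. sqnorm S c \<le> 1} c * ennreal (1 - sqnorm S c ^ r) * h c
        = (\<integral>\<^sup>+s. ennreal (w s) * indicator {0<..} s * indicator {sqnorm S c..} s \<partial>lborel) * h c"
      by (simp split: split_indicator)
  qed
  also have "\<dots> = (\<integral>\<^sup>+s. ennreal (w s * s ^ (card S + 0)) * indicator {0<..} s \<partial>lborel) * ball_integral S h"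
    by (rule nn_integral_layer_cake[OF fin _ _ _ hom]) (auto simp: w_def)
  also have "(\<integral>\<^sup>+s. ennreal (w s * s ^ (card S + 0)) * indicator {0<..} s \<partial>lborel) = ennreal (real r / real (r + card S))"
    unfolding w_def by (rule nn_integral_power_density_moment) (use False in simp)
  finally show ?thesis
    by (simp add: mult.commute)
qed (simp add: ball_integral_def)

lemma ball_integral_sqnorm_power:
  fixes h :: "('i \<Rightarrow> complex) \<Rightarrow> ennreal"
  assumes fin: "finite S" "S \<noteq> {}" and [measurable]: "h \<in> borel_measurable (PiC S)"
    and hom: "homogeneous S 0 h" and finite_ball: "ball_integral S h < \<infinity>"
  shows "ball_integral S (\<lambda>c. ennreal (sqnorm S c ^ r) * h c) = ennreal (real (card S) / real (card S + r)) * ball_integral S h"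
proof -
  define q where "q = real r / real (r + card S)"
  obtain b where b: "ball_integral S h = ennreal b" "0 \<le> b"
    using finite_ball ennreal_cases[of "ball_integral S h"] by auto
  have "ball_integral S (\<lambda>c. ennreal (sqnorm S c ^ r) * h c)
      + (\<integral>\<^sup>+c. indicator {c. sqnorm S c \<le> 1} c * ennreal (1 - sqnorm S c ^ r) * h c \<partial>PiC S)
      = ball_integral S h"
    unfolding ball_integral_def
  proof (subst nn_integral_add[symmetric])
    have "ennreal (sqnorm S c ^ r) + ennreal (1 - sqnorm S c ^ r) = 1" if "sqnorm S c \<le> 1" for c
      using that sqnorm_nonneg[of S c]
      by (simp add: ennreal_plus[symmetric] power_le_one del: ennreal_plus)
    then show "(\<integral>\<^sup>+c. indicator {c. sqnorm S c \<le> 1} c * (ennreal (sqnorm S c ^ r) * h c)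
        + indicator {c. sqnorm S c \<le> 1} c * ennreal (1 - sqnorm S c ^ r) * h c \<partial>PiC S)
      = (\<integral>\<^sup>+c. indicator {c. sqnorm S c \<le> 1} c * h c \<partial>PiC S)"
      by (intro nn_integral_cong) (auto simp: indicator_def distrib_right[symmetric])
  qed measurable
  then have "ball_integral S (\<lambda>c. ennreal (sqnorm S c ^ r) * h c) + ennreal (q * b) = ennreal b"
    using ball_integral_sqnorm_power_complement[OF fin(1) _ hom] b by (simp add: q_def ennreal_mult[symmetric])
  then have "ball_integral S (\<lambda>c. ennreal (sqnorm S c ^ r) * h c) = ennreal (b - q * b)"
    using b by (metis ennreal_add_diff_cancel_right ennreal_minus ennreal_neq_top q_def
        mult_nonneg_nonneg of_nat_0_le_iff divide_nonneg_nonneg)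
  also have "b - q * b = real (card S) / real (card S + r) * b"
  proof -
    have "real r + real (card S) > 0"
      using fin by (simp add: card_gt_0_iff add_nonneg_pos)
    then show ?thesis
      by (simp add: q_def field_simps)
  qed
  finally show ?thesis
    using b by (simp add: ennreal_mult[symmetric])
qed

lemma gaussian_nn_integral_sqnorm_power:
  fixes h :: "('i \<Rightarrow> complex) \<Rightarrow> ennreal"
  assumes fin: "finite S" "S \<noteq> {}" and [measurable]: "h \<in> borel_measurable (PiC S)"
    and hom: "homogeneous S 0 h" and finite_ball: "ball_integral S h < \<infinity>"
  shows "(\<integral>\<^sup>+c. ennreal (exp (- sqnorm S c)) * (ennreal (sqnorm S c ^ r) * h c) \<partial>PiC S)
       = ennreal (real (card S) * fact (card S - 1 + r)) * ball_integral S h"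
proof -
  have "homogeneous S r (\<lambda>c. ennreal (sqnorm S c ^ r) * h c)"
    using hom by (auto simp: homogeneous_def sqnorm_scale sqnorm_nonneg power_mult_distrib power_mult ennreal_mult mult.assoc)
  then have "(\<integral>\<^sup>+c. ennreal (exp (- sqnorm S c)) * (ennreal (sqnorm S c ^ r) * h c) \<partial>PiC S)
      = ennreal (fact (card S + r)) * (ennreal (real (card S) / real (card S + r)) * ball_integral S h)"
    using ball_integral_sqnorm_power[OF fin _ hom finite_ball]
    by (simp add: gaussian_nn_integral_homogeneous fin)
  also have "fact (card S + r) * (real (card S) / real (card S + r)) = real (card S) * fact (card S - 1 + r)"
  proof -
    have "card S > 0"
      using fin by (simp add: card_gt_0_iff)
    then show ?thesis
      by (simp add: fact_reduce[of "card S + r"] Suc_diff_le)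
  qed
  ultimately show ?thesis
    by (simp add: mult.assoc[symmetric] ennreal_mult[symmetric])
qed

lemma gaussian_nn_integral_PiC: "finite S \<Longrightarrow> (\<integral>\<^sup>+c. ennreal (exp (- sqnorm S c)) \<partial>PiC S) = ennreal (pi ^ card S)"
  using lborel_complex.product_nn_integral_prod[of S "\<lambda>_ z. ennreal (exp (- (cmod z)\<^sup>2))"]
  by (simp add: sqnorm_def exp_sum[symmetric] prod_ennreal sum_negf gaussian_nn_integral_complex ennreal_power)

lemma ball_volume:
  assumes "finite S"
  shows "ball_integral S (\<lambda>_. 1) = ennreal (pi ^ card S / fact (card S))"
proof -
  have "(\<integral>\<^sup>+c. ennreal (exp (- sqnorm S c)) * 1 \<partial>PiC S) = ennreal (fact (card S + 0)) * ball_integral S (\<lambda>_. 1)"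
    by (rule gaussian_nn_integral_homogeneous[OF assms]) (auto simp: homogeneous_def)
  then have "ennreal (pi ^ card S) = ennreal (fact (card S)) * ball_integral S (\<lambda>_. 1)"
    using gaussian_nn_integral_PiC[OF assms] by simp
  then have "ball_integral S (\<lambda>_. 1) = ennreal (pi ^ card S) / ennreal (fact (card S))"
    by (metis ennreal_eq_0_iff ennreal_neq_top fact_gt_zero ennreal_mult_divide_eq mult.commute not_less order_refl)
  then show ?thesis
    by (simp add: divide_ennreal)
qed

lemma gaussian_moment_sqnorm:
  assumes "finite S" "S \<noteq> {}"
  shows "(\<integral>\<^sup>+c. ennreal (exp (- sqnorm S c)) * ennreal (sqnorm S c ^ l) \<partial>PiC S)
       = ennreal (pi ^ card S * fact (card S - 1 + l) / fact (card S - 1))"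
proof -
  have "(\<integral>\<^sup>+c. ennreal (exp (- sqnorm S c)) * (ennreal (sqnorm S c ^ l) * 1) \<partial>PiC S)
      = ennreal (real (card S) * fact (card S - 1 + l)) * ennreal (pi ^ card S / fact (card S))"
    using gaussian_nn_integral_sqnorm_power[OF assms, of "\<lambda>_. 1" l] ball_volume[OF assms(1)]
    by (simp add: homogeneous_def)
  moreover have "real (card S) * fact (card S - 1 + l) * (pi ^ card S / fact (card S))
      = pi ^ card S * fact (card S - 1 + l) / fact (card S - 1)"
    using assms by (simp add: fact_reduce[of "card S"] card_gt_0_iff)
  ultimately show ?thesis
    by (simp add: ennreal_mult[symmetric])
qed

lemma integral_uniform_measure_unit_ball:
  fixes g :: "('i \<Rightarrow> complex) \<Rightarrow> real"
  assumes [measurable]: "g \<in> borel_measurable (PiC S)" and g: "\<And>c. 0 \<le> g c"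
  shows "integral\<^sup>L (uniform_measure (PiC S) {c \<in> space (PiC S). sqrt (sqnorm S c) \<le> 1}) g
       = enn2real (ball_integral S (\<lambda>c. ennreal (g c)) / ball_integral S (\<lambda>_. 1))"
proof -
  define B where "B = {c \<in> space (PiC S). sqrt (sqnorm S c) \<le> 1}"
  have [measurable]: "B \<in> sets (PiC S)"
    unfolding B_def by measurable
  have indicator_B: "indicator B c = (indicator {c. sqnorm S c \<le> 1} c :: ennreal)" if "c \<in> space (PiC S)" for c
    using that by (simp add: B_def indicator_def)
  have "integral\<^sup>L (uniform_measure (PiC S) B) g = enn2real (\<integral>\<^sup>+c. ennreal (g c) \<partial>uniform_measure (PiC S) B)"
    using g by (intro integral_eq_nn_integral) (simp_all add: measurable_cong_sets[OF sets_uniform_measure refl])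
  also have "(\<integral>\<^sup>+c. ennreal (g c) \<partial>uniform_measure (PiC S) B)
      = (\<integral>\<^sup>+c. ennreal (g c) * indicator B c \<partial>PiC S) / emeasure (PiC S) B"
    by (rule nn_integral_uniform_measure) measurable
  also have "(\<integral>\<^sup>+c. ennreal (g c) * indicator B c \<partial>PiC S) = ball_integral S (\<lambda>c. ennreal (g c))"
    unfolding ball_integral_def by (intro nn_integral_cong) (simp add: indicator_B mult.commute)
  also have "emeasure (PiC S) B = ball_integral S (\<lambda>_. 1)"
    unfolding ball_integral_def nn_integral_indicator[symmetric, OF \<open>B \<in> sets (PiC S)\<close>]
    by (intro nn_integral_cong) (simp add: indicator_B)
  finally show ?thesis
    unfolding B_def .
qed

lemma sphere_average_eq_gaussian_moment:
  fixes g :: "('i \<Rightarrow> complex) \<Rightarrow> real"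
  assumes S: "finite S" "S \<noteq> {}" and [measurable]: "g \<in> borel_measurable (PiC S)"
    and g: "\<And>c. 0 \<le> g c" "\<And>c. g c \<le> K"
    and invariant: "\<And>c t. c \<in> space (PiC S) \<Longrightarrow> t > 0 \<Longrightarrow> g (\<lambda>s\<in>S. t *\<^sub>R c s) = g c"
    and gauss: "(\<integral>\<^sup>+c. ennreal (exp (- sqnorm S c)) * ennreal (sqnorm S c ^ r * g c) \<partial>PiC S) = ennreal G"
    and "0 \<le> G"
  shows "integral\<^sup>L (uniform_measure (PiC S) {c \<in> space (PiC S). sqrt (sqnorm S c) \<le> 1}) g
       = fact (card S - 1) / fact (card S - 1 + r) * G / pi ^ card S"
proof -
  define d where "d = card S"
  have d: "d > 0"
    using S by (simp add: d_def card_gt_0_iff)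
  have hom: "homogeneous S 0 (\<lambda>c. ennreal (g c))"
    by (simp add: homogeneous_def invariant)
  have "ball_integral S (\<lambda>c. ennreal (g c)) \<le> ball_integral S (\<lambda>_. ennreal K * 1)"
    unfolding ball_integral_def using g by (intro nn_integral_mono mult_left_mono) (auto intro: ennreal_leI)
  also have "\<dots> = ennreal K * ball_integral S (\<lambda>_. 1)"
    unfolding ball_integral_def by (subst nn_integral_cmult[symmetric]) (measurable, simp add: mult_ac)
  also have "\<dots> < \<infinity>"
    using S by (simp add: ball_volume ennreal_mult_less_top)
  finally have finite_ball: "ball_integral S (\<lambda>c. ennreal (g c)) < \<infinity>" .
  then obtain b where b: "ball_integral S (\<lambda>c. ennreal (g c)) = ennreal b" "0 \<le> b"
    using ennreal_cases[of "ball_integral S (\<lambda>c. ennreal (g c))"] by auto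
  have "ennreal G = ennreal (real d * fact (d - 1 + r)) * ennreal b"
    unfolding gauss[symmetric] d_def b(1)[symmetric]
    using gaussian_nn_integral_sqnorm_power[OF S _ hom finite_ball]
    by (simp add: ennreal_mult sqnorm_nonneg g)
  then have "G = real d * fact (d - 1 + r) * b"
    using b \<open>0 \<le> G\<close> by (simp add: ennreal_mult[symmetric])
  moreover have "fact d = real d * fact (d - 1)"
    using d by (simp add: fact_reduce)
  ultimately show ?thesis
    using integral_uniform_measure_unit_ball[of g S] b d
    by (simp add: g ball_volume S d_def[symmetric] divide_ennreal field_simps)
qed

section \<open>Sums of Gaussian coordinates\<close>

lemma gaussian_nn_integral_sum:
  fixes G :: "complex \<Rightarrow> ennreal"
  assumes "finite V" "V \<noteq> {}" "G \<in> borel_measurable borel"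
  shows "(\<integral>\<^sup>+c. ennreal (exp (- sqnorm V c)) * G (\<Sum>v\<in>V. c v) \<partial>PiC V)
       = ennreal (pi ^ (card V - 1)) * (\<integral>\<^sup>+w. ennreal (exp (- (cmod w)\<^sup>2)) * G (sqrt (card V) *\<^sub>R w) \<partial>lborel)"
  using assms
proof (induction V arbitrary: G rule: finite_ne_induct)
  case (singleton v)
  note [measurable] = singleton
  have "(\<integral>\<^sup>+c. ennreal (exp (- sqnorm {v} c)) * G (\<Sum>v\<in>{v}. c v) \<partial>PiC {v})
      = (\<integral>\<^sup>+c. (\<lambda>z. ennreal (exp (- (cmod z)\<^sup>2)) * G z) (c v) \<partial>PiC {v})"
    by (simp add: sqnorm_def)
  also have "\<dots> = (\<integral>\<^sup>+z. ennreal (exp (- (cmod z)\<^sup>2)) * G z \<partial>lborel)"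
    by (rule lborel_complex.product_nn_integral_singleton) measurable
  finally show ?case
    by simp
next
  case (insert v0 V)
  note [measurable] = insert.prems
  define k where "k = card V"
  have k: "k \<ge> 1" "card (insert v0 V) = Suc k"
    using insert.hyps by (simp_all add: k_def Suc_le_eq card_gt_0_iff)
  have "(\<Sum>v\<in>insert v0 V. (z(v0 := w)) v) = (\<Sum>v\<in>V. z v) + w" for z :: "'a \<Rightarrow> complex" and w
    using insert.hyps by (simp add: add.commute) (rule sum.cong, auto)
  then have "(\<integral>\<^sup>+c. ennreal (exp (- sqnorm (insert v0 V) c)) * G (\<Sum>v\<in>insert v0 V. c v) \<partial>PiC (insert v0 V))
      = (\<integral>\<^sup>+w. ennreal (exp (- (cmod w)\<^sup>2)) *
           (\<integral>\<^sup>+z. ennreal (exp (- sqnorm V z)) * (\<lambda>u. G (u + w)) (\<Sum>v\<in>V. z v) \<partial>PiC V) \<partial>lborel)"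
    using insert.hyps by (simp add: gaussian_nn_integral_insert add.commute)
  also have "\<dots> = (\<integral>\<^sup>+w. ennreal (pi ^ (k - 1)) *
           (\<integral>\<^sup>+u. ennreal (exp (- (cmod w)\<^sup>2 - (cmod u)\<^sup>2)) * G (sqrt k *\<^sub>R u + w) \<partial>lborel) \<partial>lborel)"
  proof (rule nn_integral_cong)
    fix w :: complex
    have "(\<lambda>u. G (u + w)) \<in> borel_measurable borel"
      by measurable
    then have "(\<integral>\<^sup>+z. ennreal (exp (- sqnorm V z)) * G ((\<Sum>v\<in>V. z v) + w) \<partial>PiC V)
        = ennreal (pi ^ (k - 1)) * (\<integral>\<^sup>+u. ennreal (exp (- (cmod u)\<^sup>2)) * G (sqrt k *\<^sub>R u + w) \<partial>lborel)"
      using insert.IH[of "\<lambda>u. G (u + w)"] by (simp add: k_def)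
    moreover have "ennreal (exp (- (cmod w)\<^sup>2)) * (\<integral>\<^sup>+u. ennreal (exp (- (cmod u)\<^sup>2)) * G (sqrt k *\<^sub>R u + w) \<partial>lborel)
        = (\<integral>\<^sup>+u. ennreal (exp (- (cmod w)\<^sup>2 - (cmod u)\<^sup>2)) * G (sqrt k *\<^sub>R u + w) \<partial>lborel)"
      by (simp add: nn_integral_cmult[symmetric] exp_diff ennreal_mult divide_inverse exp_minus mult.assoc)
    ultimately show "ennreal (exp (- (cmod w)\<^sup>2)) *
        (\<integral>\<^sup>+z. ennreal (exp (- sqnorm V z)) * (\<lambda>u. G (u + w)) (\<Sum>v\<in>V. z v) \<partial>PiC V)
      = ennreal (pi ^ (k - 1)) *
        (\<integral>\<^sup>+u. ennreal (exp (- (cmod w)\<^sup>2 - (cmod u)\<^sup>2)) * G (sqrt k *\<^sub>R u + w) \<partial>lborel)"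
      by (simp add: mult.left_commute)
  qed
  also have "\<dots> = ennreal (pi ^ (k - 1)) * (ennreal pi *
           (\<integral>\<^sup>+u. ennreal (exp (- (cmod u)\<^sup>2)) * G (sqrt ((sqrt k)\<^sup>2 + 1) *\<^sub>R u) \<partial>lborel))"
    by (simp add: nn_integral_cmult gaussian_nn_integral_sum2)
  finally show ?case
    using k by (cases k) (simp_all add: mult.assoc[symmetric] ennreal_mult[symmetric] add.commute mult.commute)
qed

lemma gaussian_nn_integral_split_fibre:
  fixes F :: "('u \<Rightarrow> complex) \<Rightarrow> ennreal" and key :: "'i \<Rightarrow> 'u"
  assumes "finite T" "u0 \<notin> U" "key ` T \<subseteq> insert u0 U"
    and [measurable]: "F \<in> borel_measurable (PiC (insert u0 U))"
  defines "T' \<equiv> {x\<in>T. key x \<in> U}" and "T0 \<equiv> {x\<in>T. key x = u0}"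
  shows "(\<integral>\<^sup>+c. ennreal (exp (- sqnorm T c)) * F (\<lambda>u\<in>insert u0 U. \<Sum>x\<in>{x\<in>T. key x = u}. c x) \<partial>PiC T)
       = (\<integral>\<^sup>+x. ennreal (exp (- sqnorm T' x)) * (\<integral>\<^sup>+y. ennreal (exp (- sqnorm T0 y)) *
           F ((\<lambda>u\<in>U. \<Sum>x'\<in>{x'\<in>T'. key x' = u}. x x')(u0 := \<Sum>v\<in>T0. y v)) \<partial>PiC T0) \<partial>PiC T')"
proof -
  have T: "T = T' \<union> T0" "T' \<inter> T0 = {}" "finite T'" "finite T0"
    using assms by (auto simp: T0_def T'_def)
  have merge_sums: "(\<lambda>u\<in>insert u0 U. \<Sum>x\<in>{x\<in>T. key x = u}. merge T' T0 (x', y) x)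
      = (\<lambda>u\<in>U. \<Sum>x\<in>{x\<in>T'. key x = u}. x' x)(u0 := \<Sum>v\<in>T0. y v)" for x' y
    using T(2) assms(2) by (auto simp: T'_def T0_def fun_eq_iff merge_def intro!: sum.cong)
  have PiC_T: "PiC T = PiC (T' \<union> T0)" "sqnorm T = sqnorm (T' \<union> T0)"
    using T(1) by simp_all
  have "(\<lambda>c. F (\<lambda>u\<in>insert u0 U. \<Sum>x\<in>{x\<in>T. key x = u}. c x)) \<in> borel_measurable (PiC (T' \<union> T0))"
    unfolding T(1)[symmetric] by measurable
  from gaussian_nn_integral_merge[OF T(3,4,2) this] show ?thesis
    unfolding PiC_T merge_sums .
qed

lemma gaussian_nn_integral_fibre_sums_insert:
  fixes F :: "('u \<Rightarrow> complex) \<Rightarrow> ennreal" and key :: "'i \<Rightarrow> 'u"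
  assumes "finite T" "u0 \<notin> U" "key ` T \<subseteq> insert u0 U" "card {x\<in>T. key x = u0} = m" "m \<ge> 1"
    and [measurable]: "F \<in> borel_measurable (PiC (insert u0 U))"
  defines "T' \<equiv> {x\<in>T. key x \<in> U}"
  shows "(\<integral>\<^sup>+c. ennreal (exp (- sqnorm T c)) * F (\<lambda>u\<in>insert u0 U. \<Sum>x\<in>{x\<in>T. key x = u}. c x) \<partial>PiC T)
       = ennreal (pi ^ (m - 1)) * (\<integral>\<^sup>+w. ennreal (exp (- (cmod w)\<^sup>2)) *
           (\<integral>\<^sup>+x. ennreal (exp (- sqnorm T' x)) * F ((\<lambda>u\<in>U. \<Sum>x'\<in>{x'\<in>T'. key x' = u}. x x')(u0 := sqrt m *\<^sub>R w))
             \<partial>PiC T') \<partial>lborel)"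
proof -
  define T0 where "T0 = {x\<in>T. key x = u0}"
  have T: "finite T'" "finite T0" "card T0 = m"
    using assms by (auto simp: T0_def T'_def)
  then have "T0 \<noteq> {}"
    using assms(5) by auto
  interpret sigma_finite_measure "PiC T'"
    using sigma_finite_PiC[OF T(1)] .
  interpret P: pair_sigma_finite "PiC T'" "lborel :: complex measure"
    by unfold_locales
  define A where "A x = (\<lambda>u\<in>U. \<Sum>x'\<in>{x'\<in>T'. key x' = u}. x x')" for x :: "'i \<Rightarrow> complex"
  have [measurable]: "A \<in> PiC T' \<rightarrow>\<^sub>M PiC U"
    unfolding A_def by measurable
  have "(\<integral>\<^sup>+c. ennreal (exp (- sqnorm T c)) * F (\<lambda>u\<in>insert u0 U. \<Sum>x\<in>{x\<in>T. key x = u}. c x) \<partial>PiC T)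
      = (\<integral>\<^sup>+x. ennreal (exp (- sqnorm T' x)) *
           (\<integral>\<^sup>+y. ennreal (exp (- sqnorm T0 y)) * (\<lambda>s. F ((A x)(u0 := s))) (\<Sum>v\<in>T0. y v) \<partial>PiC T0) \<partial>PiC T')"
    unfolding T'_def T0_def A_def using assms(1-3) by (simp add: gaussian_nn_integral_split_fibre)
  also have "\<dots> = (\<integral>\<^sup>+x. ennreal (exp (- sqnorm T' x)) * (ennreal (pi ^ (m - 1)) *
           (\<integral>\<^sup>+w. ennreal (exp (- (cmod w)\<^sup>2)) * F ((A x)(u0 := sqrt m *\<^sub>R w)) \<partial>lborel)) \<partial>PiC T')"
  proof (rule nn_integral_cong)
    fix x assume "x \<in> space (PiC T')"
    then have "(\<lambda>s. F ((A x)(u0 := s))) \<in> borel_measurable borel"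
      using measurable_comp[OF measurable_component_update[OF measurable_space[of A] assms(2)]]
      by (simp add: comp_def)
    from gaussian_nn_integral_sum[OF T(2) \<open>T0 \<noteq> {}\<close> this] T(3)
    show "ennreal (exp (- sqnorm T' x)) *
        (\<integral>\<^sup>+y. ennreal (exp (- sqnorm T0 y)) * (\<lambda>s. F ((A x)(u0 := s))) (\<Sum>v\<in>T0. y v) \<partial>PiC T0)
      = ennreal (exp (- sqnorm T' x)) * (ennreal (pi ^ (m - 1)) *
        (\<integral>\<^sup>+w. ennreal (exp (- (cmod w)\<^sup>2)) * F ((A x)(u0 := sqrt m *\<^sub>R w)) \<partial>lborel))"
      by simp
  qed
  also have "\<dots> = ennreal (pi ^ (m - 1)) * (\<integral>\<^sup>+x. \<integral>\<^sup>+w. ennreal (exp (- (cmod w)\<^sup>2)) *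
           (ennreal (exp (- sqnorm T' x)) * F ((A x)(u0 := sqrt m *\<^sub>R w))) \<partial>lborel \<partial>PiC T')"
    by (subst nn_integral_cmult[symmetric], measurable)
       (auto intro!: nn_integral_cong simp: nn_integral_cmult[symmetric] mult_ac)
  also have "(\<integral>\<^sup>+x. \<integral>\<^sup>+w. ennreal (exp (- (cmod w)\<^sup>2)) *
           (ennreal (exp (- sqnorm T' x)) * F ((A x)(u0 := sqrt m *\<^sub>R w))) \<partial>lborel \<partial>PiC T')
      = (\<integral>\<^sup>+w. \<integral>\<^sup>+x. ennreal (exp (- (cmod w)\<^sup>2)) *
           (ennreal (exp (- sqnorm T' x)) * F ((A x)(u0 := sqrt m *\<^sub>R w))) \<partial>PiC T' \<partial>lborel)"
    by (rule P.Fubini'[symmetric]) measurable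
  also have "\<dots> = (\<integral>\<^sup>+w. ennreal (exp (- (cmod w)\<^sup>2)) *
           (\<integral>\<^sup>+x. ennreal (exp (- sqnorm T' x)) * F ((A x)(u0 := sqrt m *\<^sub>R w)) \<partial>PiC T') \<partial>lborel)"
  proof (intro nn_integral_cong nn_integral_cmult)
    fix w :: complex
    have "(\<lambda>z. F (z(u0 := sqrt m *\<^sub>R w))) \<in> borel_measurable (PiC U)"
      using assms(2) by (rule measurable_fun_upd_PiC) measurable
    then show "(\<lambda>x. ennreal (exp (- sqnorm T' x)) * F ((A x)(u0 := sqrt m *\<^sub>R w))) \<in> borel_measurable (PiC T')"
      using measurable_comp[OF \<open>A \<in> PiC T' \<rightarrow>\<^sub>M PiC U\<close>] by (simp add: comp_def)
  qed
  finally show ?thesis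
    unfolding A_def .
qed

text \<open>Summing the coordinates of a standard Gaussian vector over fibres of size \<open>m\<close> yields independent
  Gaussians of variance \<open>m\<close>.\<close>
lemma gaussian_nn_integral_fibre_sums:
  fixes F :: "('u \<Rightarrow> complex) \<Rightarrow> ennreal" and key :: "'i \<Rightarrow> 'u"
  assumes "finite U" "finite T" "key ` T \<subseteq> U" "\<And>u. u \<in> U \<Longrightarrow> card {x\<in>T. key x = u} = m" "m \<ge> 1"
    "F \<in> borel_measurable (PiC U)"
  shows "(\<integral>\<^sup>+c. ennreal (exp (- sqnorm T c)) * F (\<lambda>u\<in>U. \<Sum>x\<in>{x\<in>T. key x = u}. c x) \<partial>PiC T)
       = ennreal (pi ^ ((m - 1) * card U)) * (\<integral>\<^sup>+z. ennreal (exp (- sqnorm U z)) * F (\<lambda>u\<in>U. sqrt m *\<^sub>R z u) \<partial>PiC U)"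
  using assms
proof (induction U arbitrary: T F rule: finite_induct)
  case empty
  then show ?case
    by (simp add: sqnorm_def space_PiM_empty nn_integral_const)
next
  case (insert u0 U)
  note [measurable] = insert.prems(5)
  define T' where "T' = {x\<in>T. key x \<in> U}"
  define C where "C = ennreal (pi ^ ((m - 1) * card U))"
  have pi_power: "ennreal (pi ^ (m - 1)) * C = ennreal (pi ^ ((m - 1) * card (insert u0 U)))"
    using insert.hyps by (simp add: C_def ennreal_mult[symmetric] power_add[symmetric])
  have "(\<integral>\<^sup>+c. ennreal (exp (- sqnorm T c)) * F (\<lambda>u\<in>insert u0 U. \<Sum>x\<in>{x\<in>T. key x = u}. c x) \<partial>PiC T)
      = ennreal (pi ^ (m - 1)) * (\<integral>\<^sup>+w. ennreal (exp (- (cmod w)\<^sup>2)) *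
           (\<integral>\<^sup>+x. ennreal (exp (- sqnorm T' x)) * F ((\<lambda>u\<in>U. \<Sum>x'\<in>{x'\<in>T'. key x' = u}. x x')(u0 := sqrt m *\<^sub>R w))
             \<partial>PiC T') \<partial>lborel)"
    unfolding T'_def using insert by (intro gaussian_nn_integral_fibre_sums_insert) auto
  also have "(\<lambda>w. ennreal (exp (- (cmod w)\<^sup>2)) *
           (\<integral>\<^sup>+x. ennreal (exp (- sqnorm T' x)) * F ((\<lambda>u\<in>U. \<Sum>x'\<in>{x'\<in>T'. key x' = u}. x x')(u0 := sqrt m *\<^sub>R w)) \<partial>PiC T'))
      = (\<lambda>w. C * (ennreal (exp (- (cmod w)\<^sup>2)) *
           (\<integral>\<^sup>+z. ennreal (exp (- sqnorm U z)) * F (\<lambda>u\<in>insert u0 U. sqrt m *\<^sub>R (z(u0 := w)) u) \<partial>PiC U)))"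
  proof
    fix w :: complex
    have scale_upd: "(\<lambda>u\<in>insert u0 U. sqrt m *\<^sub>R (z(u0 := w)) u) = (\<lambda>u\<in>U. sqrt m *\<^sub>R z u)(u0 := sqrt m *\<^sub>R w)"
      for z
      using insert.hyps(2) by (auto simp: fun_eq_iff)
    have key: "key ` T' \<subseteq> U"
      by (auto simp: T'_def)
    have card: "card {x\<in>T'. key x = u} = m" if "u \<in> U" for u
      using insert.prems(3) that by (simp add: T'_def conj_commute cong: conj_cong)
    have meas: "(\<lambda>z. F (z(u0 := sqrt m *\<^sub>R w))) \<in> borel_measurable (PiC U)"
      using insert.hyps(2) by (rule measurable_fun_upd_PiC) measurable
    have "(\<integral>\<^sup>+x. ennreal (exp (- sqnorm T' x)) * F ((\<lambda>u\<in>U. \<Sum>x'\<in>{x'\<in>T'. key x' = u}. x x')(u0 := sqrt m *\<^sub>R w)) \<partial>PiC T')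
        = C * (\<integral>\<^sup>+z. ennreal (exp (- sqnorm U z)) * F ((\<lambda>u\<in>U. sqrt m *\<^sub>R z u)(u0 := sqrt m *\<^sub>R w)) \<partial>PiC U)"
      unfolding C_def by (rule insert.IH[OF _ key card insert.prems(4) meas]) (simp add: T'_def insert.prems(1))
    then show "ennreal (exp (- (cmod w)\<^sup>2)) *
        (\<integral>\<^sup>+x. ennreal (exp (- sqnorm T' x)) * F ((\<lambda>u\<in>U. \<Sum>x'\<in>{x'\<in>T'. key x' = u}. x x')(u0 := sqrt m *\<^sub>R w)) \<partial>PiC T')
      = C * (ennreal (exp (- (cmod w)\<^sup>2)) *
        (\<integral>\<^sup>+z. ennreal (exp (- sqnorm U z)) * F (\<lambda>u\<in>insert u0 U. sqrt m *\<^sub>R (z(u0 := w)) u) \<partial>PiC U))"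
      unfolding scale_upd by (simp only: mult.left_commute)
  qed
  also have "(\<integral>\<^sup>+w. C * (ennreal (exp (- (cmod w)\<^sup>2)) *
           (\<integral>\<^sup>+z. ennreal (exp (- sqnorm U z)) * F (\<lambda>u\<in>insert u0 U. sqrt m *\<^sub>R (z(u0 := w)) u) \<partial>PiC U)) \<partial>lborel)
      = C * (\<integral>\<^sup>+z. ennreal (exp (- sqnorm (insert u0 U) z)) * F (\<lambda>u\<in>insert u0 U. sqrt m *\<^sub>R z u) \<partial>PiC (insert u0 U))"
  proof -
    interpret sigma_finite_measure "PiC U"
      using sigma_finite_PiC[OF insert.hyps(1)] .
    show ?thesis
      using insert.hyps by (subst nn_integral_cmult) (measurable, simp add: gaussian_nn_integral_insert)
  qed
  finally show ?case
    using pi_power by (simp only: mult.assoc[symmetric])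
qed

lemma measurable_prod_restrict:
  fixes F :: "'j \<Rightarrow> ('i \<Rightarrow> complex) \<Rightarrow> ennreal"
  assumes "\<And>j. j \<in> I \<Longrightarrow> F j \<in> borel_measurable (PiC (T j))" "\<And>j. j \<in> I \<Longrightarrow> T j \<subseteq> S"
  shows "(\<lambda>c. \<Prod>j\<in>I. F j (restrict c (T j))) \<in> borel_measurable (PiC S)"
proof (rule borel_measurable_prod_ennreal)
  fix j assume "j \<in> I"
  from measurable_comp[OF measurable_restrict_subset[OF assms(2)] assms(1), OF this this]
  show "(\<lambda>c. F j (restrict c (T j))) \<in> borel_measurable (PiC S)"
    by (simp add: comp_def)
qed

lemma prod_restrict_merge:
  fixes F :: "'j \<Rightarrow> ('i \<Rightarrow> complex) \<Rightarrow> 'a :: comm_monoid_mult"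
  assumes "finite I" "j \<notin> I" "y \<in> space (PiC (T j))" "(\<Union>i\<in>I. T i) \<inter> T j = {}"
  shows "(\<Prod>i\<in>insert j I. F i (restrict (merge (\<Union>i\<in>I. T i) (T j) (x, y)) (T i)))
       = F j y * (\<Prod>i\<in>I. F i (restrict x (T i)))"
proof -
  have "restrict (merge (\<Union>i\<in>I. T i) (T j) (x, y)) (T i) = restrict x (T i)" if "i \<in> I" for i
    using that by (auto simp: fun_eq_iff merge_def)
  moreover have "restrict (merge (\<Union>i\<in>I. T i) (T j) (x, y)) (T j) = y"
    using assms(3,4) by (auto simp: fun_eq_iff merge_def space_PiM PiE_def extensional_def)
  ultimately show ?thesis
    using assms(1,2) by simp
qed

lemma gaussian_nn_integral_prod_blocks:
  fixes T :: "'j \<Rightarrow> 'i set" and F :: "'j \<Rightarrow> ('i \<Rightarrow> complex) \<Rightarrow> ennreal"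
  assumes "finite I" "\<And>j. j \<in> I \<Longrightarrow> finite (T j)" "disjoint_family_on T I"
    "\<And>j. j \<in> I \<Longrightarrow> F j \<in> borel_measurable (PiC (T j))"
  shows "(\<integral>\<^sup>+c. ennreal (exp (- sqnorm (\<Union>j\<in>I. T j) c)) * (\<Prod>j\<in>I. F j (restrict c (T j))) \<partial>PiC (\<Union>j\<in>I. T j))
       = (\<Prod>j\<in>I. \<integral>\<^sup>+c. ennreal (exp (- sqnorm (T j) c)) * F j c \<partial>PiC (T j))"
  using assms
proof (induction I rule: finite_induct)
  case empty
  then show ?case
    by (simp add: sqnorm_def space_PiM_empty nn_integral_const)
next
  case (insert j I)
  define S where "S = (\<Union>i\<in>I. T i)"
  have S: "finite S" "finite (T j)" "S \<inter> T j = {}" "(\<Union>i\<in>insert j I. T i) = S \<union> T j"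
    using insert by (auto simp: S_def disjoint_family_on_def)
  have [measurable]: "F j \<in> borel_measurable (PiC (T j))"
    using insert.prems(3) by simp
  have [measurable]: "(\<lambda>c. \<Prod>i\<in>I. F i (restrict c (T i))) \<in> borel_measurable (PiC S)"
    using insert.prems(3) by (intro measurable_prod_restrict) (auto simp: S_def)
  have "(\<lambda>c. \<Prod>i\<in>insert j I. F i (restrict c (T i))) \<in> borel_measurable (PiC (S \<union> T j))"
    using insert.prems(3) by (intro measurable_prod_restrict) (auto simp: S_def)
  then have "(\<integral>\<^sup>+c. ennreal (exp (- sqnorm (S \<union> T j) c)) * (\<Prod>i\<in>insert j I. F i (restrict c (T i))) \<partial>PiC (S \<union> T j))
      = (\<integral>\<^sup>+x. ennreal (exp (- sqnorm S x)) * (\<integral>\<^sup>+y. ennreal (exp (- sqnorm (T j) y)) *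
           (\<Prod>i\<in>insert j I. F i (restrict (merge S (T j) (x, y)) (T i))) \<partial>PiC (T j)) \<partial>PiC S)"
    using S by (simp add: gaussian_nn_integral_merge)
  also have "\<dots> = (\<integral>\<^sup>+x. (ennreal (exp (- sqnorm S x)) * (\<Prod>i\<in>I. F i (restrict x (T i)))) *
           (\<integral>\<^sup>+y. ennreal (exp (- sqnorm (T j) y)) * F j y \<partial>PiC (T j)) \<partial>PiC S)"
  proof (rule nn_integral_cong)
    fix x
    have "(\<Prod>i\<in>insert j I. F i (restrict (merge S (T j) (x, y)) (T i))) = F j y * (\<Prod>i\<in>I. F i (restrict x (T i)))"
      if "y \<in> space (PiC (T j))" for y
      using prod_restrict_merge[OF insert.hyps that S(3)[unfolded S_def]] by (simp add: S_def)
    then have "(\<integral>\<^sup>+y. ennreal (exp (- sqnorm (T j) y)) * (\<Prod>i\<in>insert j I. F i (restrict (merge S (T j) (x, y)) (T i))) \<partial>PiC (T j))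
        = (\<integral>\<^sup>+y. (\<Prod>i\<in>I. F i (restrict x (T i))) * (ennreal (exp (- sqnorm (T j) y)) * F j y) \<partial>PiC (T j))"
      by (intro nn_integral_cong) (simp add: mult_ac)
    also have "\<dots> = (\<Prod>i\<in>I. F i (restrict x (T i))) * (\<integral>\<^sup>+y. ennreal (exp (- sqnorm (T j) y)) * F j y \<partial>PiC (T j))"
      by (rule nn_integral_cmult) measurable
    finally show "ennreal (exp (- sqnorm S x)) *
        (\<integral>\<^sup>+y. ennreal (exp (- sqnorm (T j) y)) * (\<Prod>i\<in>insert j I. F i (restrict (merge S (T j) (x, y)) (T i))) \<partial>PiC (T j))
      = (ennreal (exp (- sqnorm S x)) * (\<Prod>i\<in>I. F i (restrict x (T i)))) *
        (\<integral>\<^sup>+y. ennreal (exp (- sqnorm (T j) y)) * F j y \<partial>PiC (T j))"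
      by (simp add: mult.assoc)
  qed
  also have "\<dots> = (\<integral>\<^sup>+x. ennreal (exp (- sqnorm S x)) * (\<Prod>i\<in>I. F i (restrict x (T i))) \<partial>PiC S) *
      (\<integral>\<^sup>+y. ennreal (exp (- sqnorm (T j) y)) * F j y \<partial>PiC (T j))"
    by (rule nn_integral_multc) measurable
  also have "(\<integral>\<^sup>+x. ennreal (exp (- sqnorm S x)) * (\<Prod>i\<in>I. F i (restrict x (T i))) \<partial>PiC S)
      = (\<Prod>i\<in>I. \<integral>\<^sup>+c. ennreal (exp (- sqnorm (T i) c)) * F i c \<partial>PiC (T i))"
    unfolding S_def using insert.prems by (intro insert.IH) (auto simp: disjoint_family_on_def)
  finally show ?case
    unfolding S(4) using insert.hyps by (simp add: mult.commute)
qed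

section \<open>Blocks and fibres of the charge sector\<close>

definition sector_fibre :: "nat \<Rightarrow> nat \<Rightarrow> nat \<Rightarrow> nat set \<Rightarrow> nat set set" where
  "sector_fibre NA NB Q0 a = {x \<in> charge_sector (NA + NB) Q0. x \<inter> {..<NA} = a}"

definition sector_block :: "nat \<Rightarrow> nat \<Rightarrow> nat \<Rightarrow> nat \<Rightarrow> nat set set" where
  "sector_block NA NB Q0 QA = {x \<in> charge_sector (NA + NB) Q0. card (x \<inter> {..<NA}) = QA}"

lemma finite_charge_sector[simp]: "finite (charge_sector N Q)"
  by (rule finite_subset[of _ "Pow {..<N}"]) (auto simp: charge_sector_def)

lemma card_charge_sector: "card (charge_sector N Q) = N choose Q"
  using n_subsets[of "{..<N}" Q] by (simp add: charge_sector_def)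

lemma sector_block_subset: "sector_block NA NB Q0 QA \<subseteq> charge_sector (NA + NB) Q0"
  by (auto simp: sector_block_def)

lemma finite_sector_block[simp]: "finite (sector_block NA NB Q0 QA)"
  using finite_subset[OF sector_block_subset] by simp

lemma sector_fibre_subset_block:
  "a \<in> charge_sector NA QA \<Longrightarrow> sector_fibre NA NB Q0 a \<subseteq> sector_block NA NB Q0 QA"
  by (auto simp: sector_fibre_def sector_block_def charge_sector_def)

lemma sector_fibre_eq: "a \<in> charge_sector NA QA \<Longrightarrow> {x \<in> sector_block NA NB Q0 QA. x \<inter> {..<NA} = a} = sector_fibre NA NB Q0 a"
  by (auto simp: sector_fibre_def sector_block_def charge_sector_def)

lemma card_sector_fibre_member:
  assumes "a \<in> charge_sector NA QA" "x \<in> sector_fibre NA NB Q0 a"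
  shows "Q0 = QA + card (x \<inter> {NA..<NA + NB})"
proof -
  have "x = a \<union> (x \<inter> {NA..<NA + NB})" "a \<inter> (x \<inter> {NA..<NA + NB}) = {}" "finite a"
    using assms by (auto simp: sector_fibre_def charge_sector_def finite_subset)
  then show ?thesis
    using assms card_Un_disjoint[of a "x \<inter> {NA..<NA + NB}"] by (auto simp: sector_fibre_def charge_sector_def)
qed

lemma bij_betw_sector_fibre:
  assumes a: "a \<in> charge_sector NA QA" and "QA \<le> Q0"
  shows "bij_betw (\<lambda>x. x \<inter> {NA..<NA + NB}) (sector_fibre NA NB Q0 a) {b. b \<subseteq> {NA..<NA + NB} \<and> card b = Q0 - QA}"
proof (rule bij_betw_byWitness[where f' = "\<lambda>b. a \<union> b"])
  show "\<forall>x\<in>sector_fibre NA NB Q0 a. a \<union> x \<inter> {NA..<NA + NB} = x"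
    "\<forall>b\<in>{b. b \<subseteq> {NA..<NA + NB} \<and> card b = Q0 - QA}. (a \<union> b) \<inter> {NA..<NA + NB} = b"
    using a by (auto simp: sector_fibre_def charge_sector_def)
  show "(\<lambda>x. x \<inter> {NA..<NA + NB}) ` sector_fibre NA NB Q0 a \<subseteq> {b. b \<subseteq> {NA..<NA + NB} \<and> card b = Q0 - QA}"
    using card_sector_fibre_member[OF a] by fastforce
  show "(\<lambda>b. a \<union> b) ` {b. b \<subseteq> {NA..<NA + NB} \<and> card b = Q0 - QA} \<subseteq> sector_fibre NA NB Q0 a"
  proof clarify
    fix b assume b: "b \<subseteq> {NA..<NA + NB}" "card b = Q0 - QA"
    have "finite a" "finite b" "a \<inter> b = {}"
      using a b(1) finite_subset[of b "{NA..<NA + NB}"] by (force simp: charge_sector_def finite_subset)+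
    then show "a \<union> b \<in> sector_fibre NA NB Q0 a"
      using a b \<open>QA \<le> Q0\<close> by (auto simp: sector_fibre_def charge_sector_def card_Un_disjoint)
  qed
qed

lemma card_sector_fibre:
  assumes "a \<in> charge_sector NA QA"
  shows "card (sector_fibre NA NB Q0 a) = (if QA \<le> Q0 then NB choose (Q0 - QA) else 0)"
proof (cases "QA \<le> Q0")
  case True
  then show ?thesis
    using bij_betw_same_card[OF bij_betw_sector_fibre[OF assms True]] n_subsets[of "{NA..<NA + NB}" "Q0 - QA"]
    by simp
next
  case False
  then have "sector_fibre NA NB Q0 a = {}"
    using card_sector_fibre_member[OF assms] by fastforce
  then show ?thesis
    using False by simp
qed

lemma card_sector_block:
  "card (sector_block NA NB Q0 QA) = (NA choose QA) * (if QA \<le> Q0 then NB choose (Q0 - QA) else 0)"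
proof -
  have "card (sector_block NA NB Q0 QA) = (\<Sum>a\<in>charge_sector NA QA. card {x \<in> sector_block NA NB Q0 QA. x \<inter> {..<NA} = a})"
    unfolding card_eq_sum by (rule sum.group[symmetric]) (auto simp: sector_block_def charge_sector_def)
  then show ?thesis
    by (simp add: sector_fibre_eq card_sector_fibre card_charge_sector)
qed

lemma charge_sector_eq_UN_sector_block:
  "charge_sector (NA + NB) Q0 = (\<Union>QA\<in>{0..NA}. sector_block NA NB Q0 QA)"
proof -
  have "card (x \<inter> {..<NA}) \<le> NA" for x :: "nat set"
    by (metis card_lessThan card_mono finite_lessThan inf_le2)
  then show ?thesis
    by (auto simp: sector_block_def)
qed

lemma disjoint_family_on_sector_block: "disjoint_family_on (sector_block NA NB Q0) I"
  by (auto simp: disjoint_family_on_def sector_block_def)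

section \<open>The measurement probabilities\<close>

definition block_weight :: "nat \<Rightarrow> nat \<Rightarrow> nat \<Rightarrow> nat \<Rightarrow> (nat set \<Rightarrow> complex) \<Rightarrow> real" where
  "block_weight NA NB Q0 QA c = (\<Sum>a\<in>charge_sector NA QA. (cmod (\<Sum>x\<in>sector_fibre NA NB Q0 a. c x))\<^sup>2)"

lemma block_weight_nonneg: "0 \<le> block_weight NA NB Q0 QA c"
  unfolding block_weight_def by (simp add: sum_nonneg)

lemma block_weight_measurable:
  assumes "sector_block NA NB Q0 QA \<subseteq> T"
  shows "block_weight NA NB Q0 QA \<in> borel_measurable (PiC T)"
  unfolding block_weight_def
proof (rule borel_measurable_sum)
  fix a assume "a \<in> charge_sector NA QA"
  then have "sector_fibre NA NB Q0 a \<subseteq> T"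
    using sector_fibre_subset_block[of _ NA QA NB Q0] assms by blast
  then have "(\<lambda>c. \<Sum>x\<in>sector_fibre NA NB Q0 a. c x) \<in> borel_measurable (PiC T)"
    by (intro borel_measurable_sum) auto
  then show "(\<lambda>c. (cmod (\<Sum>x\<in>sector_fibre NA NB Q0 a. c x))\<^sup>2) \<in> borel_measurable (PiC T)"
    by measurable
qed

lemma block_weight_restrict:
  "sector_block NA NB Q0 QA \<subseteq> T \<Longrightarrow> block_weight NA NB Q0 QA (restrict c T) = block_weight NA NB Q0 QA c"
  unfolding block_weight_def using sector_fibre_subset_block[of _ NA QA NB Q0]
  by (intro sum.cong refl arg_cong[where f = "\<lambda>z. (cmod z)\<^sup>2"]) force

lemma block_weight_scale:
  "sector_block NA NB Q0 QA \<subseteq> T \<Longrightarrow> block_weight NA NB Q0 QA (\<lambda>s\<in>T. t *\<^sub>R c s) = t\<^sup>2 * block_weight NA NB Q0 QA c"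
proof -
  assume T: "sector_block NA NB Q0 QA \<subseteq> T"
  have "(\<Sum>x\<in>sector_fibre NA NB Q0 a. (\<lambda>s\<in>T. t *\<^sub>R c s) x) = t *\<^sub>R (\<Sum>x\<in>sector_fibre NA NB Q0 a. c x)"
    if "a \<in> charge_sector NA QA" for a
    using sector_fibre_subset_block[of _ NA QA NB Q0, OF that] T
    by (auto simp: scaleR_sum_right intro!: sum.cong)
  then show ?thesis
    unfolding block_weight_def by (simp add: sum_distrib_left power_mult_distrib)
qed

lemma block_weight_le:
  assumes "finite T" "sector_block NA NB Q0 QA \<subseteq> T"
  shows "block_weight NA NB Q0 QA c \<le> real (NA choose QA) * (real (card T))\<^sup>2 * sqnorm T c"
proof -
  have "(cmod (\<Sum>x\<in>sector_fibre NA NB Q0 a. c x))\<^sup>2 \<le> (real (card T))\<^sup>2 * sqnorm T c"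
    if "a \<in> charge_sector NA QA" for a
  proof -
    have F: "sector_fibre NA NB Q0 a \<subseteq> T"
      using sector_fibre_subset_block[of _ NA QA NB Q0, OF that] assms(2) by simp
    then have "real (card (sector_fibre NA NB Q0 a)) \<le> real (card T)"
      using card_mono[OF assms(1)] by simp
    then show ?thesis
      using cmod_sum_square_le_sqnorm[OF assms(1) F, of c]
      by (meson dual_order.trans mult_right_mono power_mono of_nat_0_le_iff sqnorm_nonneg)
  qed
  then have "block_weight NA NB Q0 QA c \<le> (\<Sum>a\<in>charge_sector NA QA. (real (card T))\<^sup>2 * sqnorm T c)"
    unfolding block_weight_def by (rule sum_mono)
  then show ?thesis
    by (simp add: card_charge_sector)
qed

lemma gaussian_moment_sqnorm_fibre_sums:
  fixes key :: "'i \<Rightarrow> 'u"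
  assumes U: "finite U" "U \<noteq> {}" and T: "finite T" "key ` T \<subseteq> U"
    and fibres: "\<And>u. u \<in> U \<Longrightarrow> card {x\<in>T. key x = u} = m" and "m \<ge> 1"
  shows "(\<integral>\<^sup>+c. ennreal (exp (- sqnorm T c)) * ennreal (sqnorm U (\<lambda>u\<in>U. \<Sum>x\<in>{x\<in>T. key x = u}. c x) ^ l) \<partial>PiC T)
       = ennreal (pi ^ card T * (real m ^ l * (fact (card U - 1 + l) / fact (card U - 1))))"
proof -
  have "card T = (\<Sum>u\<in>U. card {x\<in>T. key x = u})"
    unfolding card_eq_sum using U(1) T by (intro sum.group[symmetric]) auto
  then have card_T: "card T = (m - 1) * card U + card U"
    using \<open>m \<ge> 1\<close> fibres by (cases m) simp_all
  have "(\<integral>\<^sup>+c. ennreal (exp (- sqnorm T c)) * ennreal (sqnorm U (\<lambda>u\<in>U. \<Sum>x\<in>{x\<in>T. key x = u}. c x) ^ l) \<partial>PiC T)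
      = ennreal (pi ^ ((m - 1) * card U)) *
        (\<integral>\<^sup>+z. ennreal (exp (- sqnorm U z)) * ennreal (sqnorm U (\<lambda>u\<in>U. sqrt m *\<^sub>R z u) ^ l) \<partial>PiC U)"
    using assms by (intro gaussian_nn_integral_fibre_sums) auto
  also have "(\<integral>\<^sup>+z. ennreal (exp (- sqnorm U z)) * ennreal (sqnorm U (\<lambda>u\<in>U. sqrt m *\<^sub>R z u) ^ l) \<partial>PiC U)
      = ennreal (real m ^ l) * ennreal (pi ^ card U * fact (card U - 1 + l) / fact (card U - 1))"
    using gaussian_moment_sqnorm[OF U, of l]
    by (simp add: sqnorm_scale power_mult_distrib ennreal_mult sqnorm_nonneg mult.left_commute nn_integral_cmult)
  also have "ennreal (pi ^ ((m - 1) * card U)) *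
      (ennreal (real m ^ l) * ennreal (pi ^ card U * fact (card U - 1 + l) / fact (card U - 1)))
      = ennreal (pi ^ card T * (real m ^ l * (fact (card U - 1 + l) / fact (card U - 1))))"
    unfolding card_T by (simp add: ennreal_mult'[symmetric] power_add mult_ac)
  finally show ?thesis .
qed

lemma gaussian_nn_integral_block_weight_power:
  fixes NA NB Q0 QA l :: nat
  assumes QA: "QA \<le> NA"
  defines "m \<equiv> if QA \<le> Q0 then NB choose (Q0 - QA) else 0" and "d \<equiv> NA choose QA"
  shows "(\<integral>\<^sup>+c. ennreal (exp (- sqnorm (sector_block NA NB Q0 QA) c)) * ennreal (block_weight NA NB Q0 QA c ^ l)
           \<partial>PiC (sector_block NA NB Q0 QA))
       = ennreal (pi ^ card (sector_block NA NB Q0 QA) * (real m ^ l * (fact (d - 1 + l) / fact (d - 1))))"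
proof (cases "m = 0")
  case True
  then have "card (sector_block NA NB Q0 QA) = 0"
    by (simp add: card_sector_block flip: m_def)
  then have "sector_block NA NB Q0 QA = {}"
    by simp
  moreover have "block_weight NA NB Q0 QA c = 0" for c
    using sector_fibre_subset_block[of _ NA QA NB Q0] \<open>sector_block NA NB Q0 QA = {}\<close>
    unfolding block_weight_def by (intro sum.neutral) force
  ultimately show ?thesis
    using True by (cases "l = 0") (simp_all add: sqnorm_def space_PiM_empty power_0_left)
next
  case False
  define T where "T = sector_block NA NB Q0 QA"
  define U where "U = charge_sector NA QA"
  have bw: "block_weight NA NB Q0 QA c = sqnorm U (\<lambda>u\<in>U. \<Sum>x\<in>{x\<in>T. x \<inter> {..<NA} = u}. c x)" for c
    by (simp add: block_weight_def sqnorm_def sector_fibre_eq T_def U_def)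
  have "card U = d"
    by (simp add: U_def d_def card_charge_sector)
  then have "U \<noteq> {}"
    using QA by (auto simp: d_def)
  have "(\<integral>\<^sup>+c. ennreal (exp (- sqnorm T c)) * ennreal (block_weight NA NB Q0 QA c ^ l) \<partial>PiC T)
      = ennreal (pi ^ card T * (real m ^ l * (fact (card U - 1 + l) / fact (card U - 1))))"
    unfolding bw
  proof (rule gaussian_moment_sqnorm_fibre_sums)
    show "(\<lambda>x. x \<inter> {..<NA}) ` T \<subseteq> U"
      by (auto simp: T_def U_def sector_block_def charge_sector_def)
    show "card {x\<in>T. x \<inter> {..<NA} = u} = m" if "u \<in> U" for u
      using that by (simp add: T_def U_def sector_fibre_eq card_sector_fibre m_def)
  qed (use False \<open>U \<noteq> {}\<close> in \<open>simp_all add: T_def U_def\<close>)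
  then show ?thesis
    using \<open>card U = d\<close> by (simp add: T_def)
qed

lemma gaussian_nn_integral_block_weight_product:
  fixes NA NB Q0 :: nat and l :: "nat \<Rightarrow> nat"
  defines "S0 \<equiv> charge_sector (NA + NB) Q0"
  shows "(\<integral>\<^sup>+c. ennreal (exp (- sqnorm S0 c)) * ennreal (\<Prod>QA\<in>{0..NA}. block_weight NA NB Q0 QA c ^ l QA) \<partial>PiC S0)
       = ennreal (pi ^ card S0 * (\<Prod>QA\<in>{0..NA}. real (if QA \<le> Q0 then NB choose (Q0 - QA) else 0) ^ l QA
            * (fact ((NA choose QA) - 1 + l QA) / fact ((NA choose QA) - 1))))"
proof -
  define Y where "Y QA = real (if QA \<le> Q0 then NB choose (Q0 - QA) else 0) ^ l QA
      * (fact ((NA choose QA) - 1 + l QA) / fact ((NA choose QA) - 1))" for QA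
  have S0: "S0 = (\<Union>QA\<in>{0..NA}. sector_block NA NB Q0 QA)"
    unfolding S0_def by (rule charge_sector_eq_UN_sector_block)
  have "(\<integral>\<^sup>+c. ennreal (exp (- sqnorm S0 c)) * ennreal (\<Prod>QA\<in>{0..NA}. block_weight NA NB Q0 QA c ^ l QA) \<partial>PiC S0)
      = (\<integral>\<^sup>+c. ennreal (exp (- sqnorm S0 c)) *
           (\<Prod>QA\<in>{0..NA}. ennreal (block_weight NA NB Q0 QA (restrict c (sector_block NA NB Q0 QA)) ^ l QA)) \<partial>PiC S0)"
    by (simp add: block_weight_restrict prod_ennreal block_weight_nonneg)
  also have "\<dots> = (\<Prod>QA\<in>{0..NA}. \<integral>\<^sup>+c. ennreal (exp (- sqnorm (sector_block NA NB Q0 QA) c)) *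
           ennreal (block_weight NA NB Q0 QA c ^ l QA) \<partial>PiC (sector_block NA NB Q0 QA))"
    unfolding S0 using block_weight_measurable[OF order_refl]
    by (intro gaussian_nn_integral_prod_blocks) (auto simp: disjoint_family_on_sector_block)
  also have "\<dots> = (\<Prod>QA\<in>{0..NA}. ennreal (pi ^ card (sector_block NA NB Q0 QA) * Y QA))"
    by (intro prod.cong refl) (simp add: gaussian_nn_integral_block_weight_power Y_def)
  also have "\<dots> = ennreal (\<Prod>QA\<in>{0..NA}. pi ^ card (sector_block NA NB Q0 QA) * Y QA)"
    by (intro prod_ennreal) (simp add: Y_def)
  also have "card S0 = (\<Sum>QA\<in>{0..NA}. card (sector_block NA NB Q0 QA))"
    unfolding S0 by (intro card_UN_disjoint) (auto simp: sector_block_def)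
  then have "(\<Prod>QA\<in>{0..NA}. pi ^ card (sector_block NA NB Q0 QA) * Y QA) = pi ^ card S0 * (\<Prod>QA\<in>{0..NA}. Y QA)"
    by (simp add: prod.distrib power_sum)
  finally show ?thesis
    unfolding Y_def .
qed

lemma plus_proj_B_eq: "plus_proj_B NA NB x y = complex_of_real ((1 / 2) ^ NB)"
proof -
  have "plus_amp b * cnj (plus_amp b') = complex_of_real (1 / 2)" for b b'
    unfolding plus_amp_def
    by (simp only: complex_cnj_complex_of_real of_real_mult[symmetric]) (simp add: real_sqrt_mult[symmetric])
  then have "plus_proj_B NA NB x y = (\<Prod>j = NA..<NA + NB. complex_of_real (1 / 2))"
    unfolding plus_proj_B_def by (intro prod.cong refl)
  then show ?thesis
    by (simp add: of_real_power)
qed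

lemma sum_sum_same_key:
  fixes f :: "'a \<Rightarrow> complex" and key :: "'a \<Rightarrow> 'k"
  assumes "finite X" "finite K" "key ` X \<subseteq> K"
  shows "(\<Sum>x\<in>X. \<Sum>y\<in>X. if key x = key y \<and> P (key x) then cnj (f x) * f y else 0)
       = (\<Sum>a\<in>{a\<in>K. P a}. complex_of_real ((cmod (\<Sum>x\<in>{x\<in>X. key x = a}. f x))\<^sup>2))"
proof -
  have "complex_of_real ((cmod (\<Sum>x\<in>{x\<in>X. key x = a}. f x))\<^sup>2)
      = (\<Sum>x\<in>{x\<in>X. key x = a}. \<Sum>y\<in>{y\<in>X. key y = a}. cnj (f x) * f y)" for a
  proof -
    have "complex_of_real ((cmod (\<Sum>x\<in>{x\<in>X. key x = a}. f x))\<^sup>2)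
        = cnj (\<Sum>x\<in>{x\<in>X. key x = a}. f x) * (\<Sum>x\<in>{x\<in>X. key x = a}. f x)"
      by (subst complex_norm_square) (rule mult.commute)
    then show ?thesis
      by (simp add: cnj_sum sum_product)
  qed
  then have "(\<Sum>a\<in>{a\<in>K. P a}. complex_of_real ((cmod (\<Sum>x\<in>{x\<in>X. key x = a}. f x))\<^sup>2))
      = (\<Sum>a\<in>K. if P a then \<Sum>x\<in>{x\<in>X. key x = a}. \<Sum>y\<in>{y\<in>X. key y = a}. cnj (f x) * f y else 0)"
    using assms(2) by (simp add: sum.inter_filter)
  also have "\<dots> = (\<Sum>a\<in>K. \<Sum>x\<in>{x\<in>X. key x = a}. if P (key x) then \<Sum>y\<in>{y\<in>X. key y = key x}. cnj (f x) * f y else 0)"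
    by (intro sum.cong refl) auto
  also have "\<dots> = (\<Sum>x\<in>X. if P (key x) then \<Sum>y\<in>{y\<in>X. key y = key x}. cnj (f x) * f y else 0)"
    using assms by (intro sum.group) auto
  also have "\<dots> = (\<Sum>x\<in>X. \<Sum>y\<in>X. if key x = key y \<and> P (key x) then cnj (f x) * f y else 0)"
    using assms(1) by (intro sum.cong refl) (simp add: sum.inter_filter[symmetric] eq_commute)
  finally show ?thesis ..
qed

lemma expval_eq_sum_support:
  assumes S: "S \<subseteq> basis_strings N" and \<Phi>: "\<And>x. x \<notin> S \<Longrightarrow> \<Phi> x = 0"
  shows "expval N Op \<Phi> = (\<Sum>x\<in>S. \<Sum>y\<in>S. cnj (\<Phi> x) * Op x y * \<Phi> y)"
proof -
  have fin: "finite (basis_strings N)"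
    by (simp add: basis_strings_def)
  have "(\<Sum>y\<in>basis_strings N. cnj (\<Phi> x) * Op x y * \<Phi> y) = (\<Sum>y\<in>S. cnj (\<Phi> x) * Op x y * \<Phi> y)" for x
    by (rule sum.mono_neutral_right[OF fin S]) (use \<Phi> in auto)
  then show ?thesis
    unfolding expval_def using \<Phi> by (intro sum.mono_neutral_cong_right[OF fin S]) auto
qed

lemma expval_charge_plus:
  assumes \<Phi>: "\<And>x. x \<notin> charge_sector (NA + NB) Q0 \<Longrightarrow> \<Phi> x = 0"
  shows "expval (NA + NB) (\<lambda>x y. charge_proj_A NA QA x y * plus_proj_B NA NB x y) \<Phi>
       = complex_of_real ((1 / 2) ^ NB * block_weight NA NB Q0 QA \<Phi>)"
proof -
  define S0 where "S0 = charge_sector (NA + NB) Q0"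
  define key where "key x = x \<inter> {..<NA}" for x :: "nat set"
  have "expval (NA + NB) (\<lambda>x y. charge_proj_A NA QA x y * plus_proj_B NA NB x y) \<Phi>
      = (\<Sum>x\<in>S0. \<Sum>y\<in>S0. cnj (\<Phi> x) * (charge_proj_A NA QA x y * plus_proj_B NA NB x y) * \<Phi> y)"
    using \<Phi> by (intro expval_eq_sum_support) (auto simp: S0_def charge_sector_def basis_strings_def)
  also have "\<dots> = complex_of_real ((1 / 2) ^ NB) *
      (\<Sum>x\<in>S0. \<Sum>y\<in>S0. if key x = key y \<and> card (key x) = QA then cnj (\<Phi> x) * \<Phi> y else 0)"
  proof -
    have "cnj (\<Phi> x) * (charge_proj_A NA QA x y * plus_proj_B NA NB x y) * \<Phi> y
        = complex_of_real ((1 / 2) ^ NB) * (if key x = key y \<and> card (key x) = QA then cnj (\<Phi> x) * \<Phi> y else 0)"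
      for x y
      unfolding charge_proj_A_def plus_proj_B_eq key_def
      by (cases "x \<inter> {..<NA} = y \<inter> {..<NA} \<and> card (x \<inter> {..<NA}) = QA")
         (simp_all only: if_True if_False, simp_all)
    then show ?thesis
      by (simp only: sum_distrib_left)
  qed
  also have "(\<Sum>x\<in>S0. \<Sum>y\<in>S0. if key x = key y \<and> card (key x) = QA then cnj (\<Phi> x) * \<Phi> y else 0)
      = (\<Sum>a\<in>{a \<in> Pow {..<NA}. card a = QA}. complex_of_real ((cmod (\<Sum>x\<in>{x\<in>S0. key x = a}. \<Phi> x))\<^sup>2))"
    by (intro sum_sum_same_key) (auto simp: S0_def key_def)
  also have "\<dots> = complex_of_real (block_weight NA NB Q0 QA \<Phi>)"
    by (simp add: block_weight_def charge_sector_def sector_fibre_def S0_def key_def Pow_def)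
  finally show ?thesis
    by simp
qed

lemma block_weight_sector_state:
  "block_weight NA NB Q0 QA (sector_state (NA + NB) Q0 c)
     = block_weight NA NB Q0 QA c / sqnorm (charge_sector (NA + NB) Q0) c"
proof -
  define n where "n = sector_norm (NA + NB) Q0 c"
  have n: "n\<^sup>2 = sqnorm (charge_sector (NA + NB) Q0) c" "0 \<le> n"
    by (simp_all add: n_def sector_norm_def sqnorm_def sum_nonneg)
  have "(\<Sum>x\<in>sector_fibre NA NB Q0 a. sector_state (NA + NB) Q0 c x) = (\<Sum>x\<in>sector_fibre NA NB Q0 a. c x) / n" for a
    by (simp add: sum_divide_distrib sector_state_def n_def sector_fibre_def)
  then have "block_weight NA NB Q0 QA (sector_state (NA + NB) Q0 c)
      = (\<Sum>a\<in>charge_sector NA QA. (cmod (\<Sum>x\<in>sector_fibre NA NB Q0 a. c x))\<^sup>2 / n\<^sup>2)"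
    using n(2) by (simp only: block_weight_def norm_divide power_divide norm_of_real abs_of_nonneg)
  then show ?thesis
    by (simp add: block_weight_def sum_divide_distrib n(1))
qed

lemma p_plus_sector_state:
  "p_plus NA NB QA (sector_state (NA + NB) Q0 c)
     = block_weight NA NB Q0 QA c / (2 ^ NB * sqnorm (charge_sector (NA + NB) Q0) c)"
proof -
  have "expval (NA + NB) (\<lambda>x y. charge_proj_A NA QA x y * plus_proj_B NA NB x y) (sector_state (NA + NB) Q0 c)
      = complex_of_real ((1 / 2) ^ NB * block_weight NA NB Q0 QA (sector_state (NA + NB) Q0 c))"
    by (rule expval_charge_plus) (simp add: sector_state_def)
  then show ?thesis
    by (simp add: p_plus_def block_weight_sector_state power_divide)
qed

definition plus_moment :: "nat \<Rightarrow> nat \<Rightarrow> nat \<Rightarrow> (nat \<Rightarrow> nat) \<Rightarrow> (nat set \<Rightarrow> complex) \<Rightarrow> real" where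
  "plus_moment NA NB Q0 l c = (\<Prod>QA\<in>{0..NA}. p_plus NA NB QA (sector_state (NA + NB) Q0 c) ^ l QA)"

lemma plus_moment_eq:
  "plus_moment NA NB Q0 l c
     = (\<Prod>QA\<in>{0..NA}. (block_weight NA NB Q0 QA c / (2 ^ NB * sqnorm (charge_sector (NA + NB) Q0) c)) ^ l QA)"
  by (simp add: plus_moment_def p_plus_sector_state)

lemma plus_moment_measurable:
  "plus_moment NA NB Q0 l \<in> borel_measurable (PiC (charge_sector (NA + NB) Q0))"
proof -
  have [measurable]: "block_weight NA NB Q0 QA \<in> borel_measurable (PiC (charge_sector (NA + NB) Q0))" for QA
    by (rule block_weight_measurable[OF sector_block_subset])
  show ?thesis
    unfolding plus_moment_eq[abs_def] by measurable
qed

lemma plus_moment_nonneg: "0 \<le> plus_moment NA NB Q0 l c"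
  unfolding plus_moment_eq by (intro prod_nonneg zero_le_power divide_nonneg_nonneg) (simp_all add: block_weight_nonneg sqnorm_nonneg)

lemma plus_moment_scale:
  assumes "t > 0"
  shows "plus_moment NA NB Q0 l (\<lambda>s\<in>charge_sector (NA + NB) Q0. t *\<^sub>R c s) = plus_moment NA NB Q0 l c"
proof -
  have "t\<^sup>2 * b / (2 ^ NB * (t\<^sup>2 * n)) = b / (2 ^ NB * n)" for b n :: real
    using assms by (simp add: field_simps)
  then show ?thesis
    by (simp add: plus_moment_eq block_weight_scale[OF sector_block_subset] sqnorm_scale)
qed

lemma plus_moment_le:
  "plus_moment NA NB Q0 l c \<le> (\<Prod>QA\<in>{0..NA}. (real (NA choose QA) * (real (card (charge_sector (NA + NB) Q0)))\<^sup>2) ^ l QA)"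
  unfolding plus_moment_eq
proof (intro prod_mono conjI power_mono)
  fix QA
  define S0 where "S0 = charge_sector (NA + NB) Q0"
  define C where "C = real (NA choose QA) * (real (card S0))\<^sup>2"
  have b: "block_weight NA NB Q0 QA c \<le> C * sqnorm S0 c"
    unfolding C_def S0_def by (intro block_weight_le sector_block_subset) simp
  show "block_weight NA NB Q0 QA c / (2 ^ NB * sqnorm S0 c) \<le> C"
  proof (cases "sqnorm S0 c = 0")
    case False
    then have "sqnorm S0 c > 0"
      using sqnorm_nonneg[of S0 c] by simp
    then have "block_weight NA NB Q0 QA c / (2 ^ NB * sqnorm S0 c) \<le> block_weight NA NB Q0 QA c / sqnorm S0 c"
      by (intro divide_left_mono block_weight_nonneg) (simp_all add: mult_le_cancel_right1)
    also have "\<dots> \<le> C"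
      using b \<open>sqnorm S0 c > 0\<close> by (simp add: divide_le_eq)
    finally show ?thesis .
  qed (simp add: C_def)
qed (simp_all add: block_weight_nonneg sqnorm_nonneg)

text \<open>At \<open>|c| = 0\<close> the quotients in \<open>plus_moment\<close> are \<open>x / 0 = 0\<close>; the identity still holds because
  \<open>block_weight_le\<close> forces all block weights to vanish there.\<close>
lemma sqnorm_power_mult_plus_moment:
  fixes NA NB Q0 :: nat and l :: "nat \<Rightarrow> nat"
  defines "S0 \<equiv> charge_sector (NA + NB) Q0" and "r \<equiv> \<Sum>QA\<in>{0..NA}. l QA"
  shows "sqnorm S0 c ^ r * plus_moment NA NB Q0 l c = (\<Prod>QA\<in>{0..NA}. block_weight NA NB Q0 QA c ^ l QA) / 2 ^ (r * NB)"
proof (cases "sqnorm S0 c = 0")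
  case True
  then have "block_weight NA NB Q0 QA c = 0" for QA
    using block_weight_le[OF _ sector_block_subset, of NA NB Q0 QA c] block_weight_nonneg[of NA NB Q0 QA c]
    by (simp add: S0_def)
  then show ?thesis
    using True by (cases "r = 0") (simp_all add: plus_moment_eq r_def S0_def[symmetric] power_sum[symmetric] power_0_left)
next
  case False
  then show ?thesis
    by (simp add: plus_moment_eq r_def S0_def[symmetric] power_divide power_mult_distrib prod_dividef
        prod.distrib power_sum power_mult[symmetric] sum_distrib_left mult.commute)
qed

lemma gaussian_moment_plus_moment:
  fixes NA NB Q0 :: nat and l :: "nat \<Rightarrow> nat"
  defines "S0 \<equiv> charge_sector (NA + NB) Q0" and "r \<equiv> \<Sum>QA\<in>{0..NA}. l QA"
    and "P \<equiv> \<Prod>QA\<in>{0..NA}. real (if QA \<le> Q0 then NB choose (Q0 - QA) else 0) ^ l QA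
             * (fact ((NA choose QA) - 1 + l QA) / fact ((NA choose QA) - 1))"
  shows "(\<integral>\<^sup>+c. ennreal (exp (- sqnorm S0 c)) * ennreal (sqnorm S0 c ^ r * plus_moment NA NB Q0 l c) \<partial>PiC S0)
       = ennreal (pi ^ card S0 * P / 2 ^ (r * NB))"
proof -
  have "(\<integral>\<^sup>+c. ennreal (exp (- sqnorm S0 c)) * ennreal (sqnorm S0 c ^ r * plus_moment NA NB Q0 l c) \<partial>PiC S0)
      = (\<integral>\<^sup>+c. ennreal (1 / 2 ^ (r * NB)) *
           (ennreal (exp (- sqnorm S0 c)) * ennreal (\<Prod>QA\<in>{0..NA}. block_weight NA NB Q0 QA c ^ l QA)) \<partial>PiC S0)"
    unfolding S0_def r_def sqnorm_power_mult_plus_moment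
    by (intro nn_integral_cong) (simp add: ennreal_mult[symmetric] prod_nonneg block_weight_nonneg mult_ac)
  also have "\<dots> = ennreal (1 / 2 ^ (r * NB)) *
      (\<integral>\<^sup>+c. ennreal (exp (- sqnorm S0 c)) * ennreal (\<Prod>QA\<in>{0..NA}. block_weight NA NB Q0 QA c ^ l QA) \<partial>PiC S0)"
  proof (rule nn_integral_cmult)
    have [measurable]: "block_weight NA NB Q0 QA \<in> borel_measurable (PiC S0)" for QA
      unfolding S0_def by (rule block_weight_measurable[OF sector_block_subset])
    show "(\<lambda>c. ennreal (exp (- sqnorm S0 c)) * ennreal (\<Prod>QA\<in>{0..NA}. block_weight NA NB Q0 QA c ^ l QA))
        \<in> borel_measurable (PiC S0)"
      by measurable
  qed
  also have "(\<integral>\<^sup>+c. ennreal (exp (- sqnorm S0 c)) * ennreal (\<Prod>QA\<in>{0..NA}. block_weight NA NB Q0 QA c ^ l QA) \<partial>PiC S0)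
      = ennreal (pi ^ card S0 * P)"
    unfolding S0_def P_def by (rule gaussian_nn_integral_block_weight_product)
  finally show ?thesis
    by (simp add: ennreal_mult'[symmetric])
qed

theorem mainTheorem3:
  fixes NA NB Q0 :: nat and l :: "nat \<Rightarrow> nat"
  assumes "Q0 \<le> NA + NB"
  shows "haar_expectation (NA + NB) Q0
           (\<lambda>\<Phi>. \<Prod>QA\<in>{0..NA}. (p_plus NA NB QA \<Phi>) ^ l QA)
         = real (fact ((NA + NB choose Q0) - 1))
             / real (fact ((NA + NB choose Q0) - 1 + (\<Sum>QA\<in>{0..NA}. l QA)))
           * (1 / 2 ^ ((\<Sum>QA\<in>{0..NA}. l QA) * NB))
           * (\<Prod>QA\<in>{0..NA}.
                real (if QA \<le> Q0 then NB choose (Q0 - QA) else 0) ^ l QA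
                * (real (fact ((NA choose QA) - 1 + l QA)) / real (fact ((NA choose QA) - 1))))"
proof -
  define S0 where "S0 = charge_sector (NA + NB) Q0"
  define r where "r = (\<Sum>QA\<in>{0..NA}. l QA)"
  define P where "P = (\<Prod>QA\<in>{0..NA}. real (if QA \<le> Q0 then NB choose (Q0 - QA) else 0) ^ l QA
      * (fact ((NA choose QA) - 1 + l QA) / fact ((NA choose QA) - 1)))"
  have card_S0: "card S0 = NA + NB choose Q0"
    by (simp add: S0_def card_charge_sector)
  then have S0: "finite S0" "S0 \<noteq> {}"
    using assms by (auto simp: S0_def)
  have "0 \<le> pi ^ card S0 * P / 2 ^ (r * NB)"
    by (simp add: P_def prod_nonneg)
  have "haar_expectation (NA + NB) Q0 (\<lambda>\<Phi>. \<Prod>QA\<in>{0..NA}. (p_plus NA NB QA \<Phi>) ^ l QA)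
      = integral\<^sup>L (uniform_measure (PiC S0) {c \<in> space (PiC S0). sqrt (sqnorm S0 c) \<le> 1}) (plus_moment NA NB Q0 l)"
    by (simp add: haar_expectation_def sector_space_def sector_ball_def sector_norm_def sqnorm_def
        S0_def plus_moment_def[abs_def])
  also have "\<dots> = fact (card S0 - 1) / fact (card S0 - 1 + r) * (pi ^ card S0 * P / 2 ^ (r * NB)) / pi ^ card S0"
    using S0 plus_moment_measurable plus_moment_nonneg plus_moment_le plus_moment_scale
      gaussian_moment_plus_moment[of NA NB Q0 l] \<open>0 \<le> pi ^ card S0 * P / 2 ^ (r * NB)\<close>
    by (intro sphere_average_eq_gaussian_moment) (simp_all add: S0_def r_def P_def)
  finally show ?thesis
    by (simp add: card_S0 r_def P_def)
qed

end
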